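(* Let $\Omega\subseteq\mathbb R^m$ be open, let $k\in\{0,\dots,m\}$ with $2k\neq m$, and let $F_k\in\mathcal C^4(\Omega)$ take values in the $k$-vectors of $\mathbb R_{0,m}$. Suppose $F_k$ is harmonic in $\Omega$ (respectively, inframonogenic in $\Omega$). Then $F_k$ is also inframonogenic (respectively, harmonic) in $\Omega$ if and only if any one of the following holds: (i) $F_k(\underline x)\underline x$ is left $3$-monogenic in $\Omega$, i.e. $\partial_{\underline x}^3\big(F_k(\underline x)\underline x\big)=0$; (ii) $\underline xF_k(\underline x)$ is right $3$-monogenic in $\Omega$, i.e. $\big(\underline xF_k(\underline x)\big)\partial_{\underline x}^3=0$; (iii) $\underline xF_k(\underline x)\underline x$ is biharmonic in $\Omega$, i.e. $\Delta_{\underline x}^2\big(\underline xF_k(\underline x)\underline x\big)=0$.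
   Context: $\mathbb R_{0,m}$ is the $2^m$-dimensional real Clifford algebra generated by the orthonormal basis $e_1,\dots,e_m$ of $\mathbb R^m$ with relations $e_je_k+e_ke_j=-2\delta_{jk}$; it has basis $e_A=e_{j_1}\cdots e_{j_k}$, $A=\{j_1<\dots<j_k\}$, and the $k$-vectors are $\sum_{|A|=k}a_Ae_A$, $a_A\in\mathbb R$. A point of $\mathbb R^m$ is identified with $\underline x=\sum_j x_je_j$. The Dirac operator $\partial_{\underline x}=\sum_j e_j\partial_{x_j}$ acts from the left, $\partial_{\underline x}f=\sum_j e_j\partial_{x_j}f$, or from the right, $f\partial_{\underline x}=\sum_j(\partial_{x_j}f)e_j$; powers denote iterated application on the same side. $f\in\mathcal C^2$ is inframonogenic if $\partial_{\underline x}f\partial_{\underline x}=\sum_{i,j}e_i(\partial_{x_i}\partial_{x_j}f)e_j=0$. $\Delta_{\underline x}=\sum_j\partial_{x_j}^2$. *)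

theory Defs
  imports "HOL-Analysis.Analysis"
begin

text \<open>The Clifford algebra R_{0,m}, with m = CARD('n), is modelled as functions
 'n set \<Rightarrow> real (coefficient of e_A for each A \<subseteq> {basis indices}).
 The basis indices 'n are linearly ordered; e_A = e_{j1}...e_{jk} with j1 < ... < jk.\<close>

type_synonym 'n clif = "'n set \<Rightarrow> real"

text \<open>e_A e_B = (-1)^(inversions(A,B) + |A \<inter> B|) e_{A symdiff B}\<close>
definition csign :: "'n::{finite,linorder} set \<Rightarrow> 'n set \<Rightarrow> real" where
  "csign A B = (-1) ^ (card {(a, b). a \<in> A \<and> b \<in> B \<and> b < a} + card (A \<inter> B))"

definition symd :: "'a set \<Rightarrow> 'a set \<Rightarrow> 'a set" where
  "symd A B = (A - B) \<union> (B - A)"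

definition cmul :: "'n::{finite,linorder} clif \<Rightarrow> 'n clif \<Rightarrow> 'n clif" (infixl "\<odot>" 70) where
  "cmul a b = (\<lambda>C. \<Sum>A\<in>UNIV. a A * b (symd A C) * csign A (symd A C))"

definition cbasis :: "'n::{finite,linorder} \<Rightarrow> 'n clif" where
  "cbasis j = (\<lambda>A. if A = {j} then 1 else 0)"

definition cvec :: "(real, 'n::{finite,linorder}) vec \<Rightarrow> 'n clif" where
  "cvec x = (\<lambda>A. \<Sum>j\<in>UNIV. x $ j * cbasis j A)"

definition is_kvector :: "nat \<Rightarrow> 'n::{finite,linorder} clif \<Rightarrow> bool" where
  "is_kvector k a \<longleftrightarrow> (\<forall>A. card A \<noteq> k \<longrightarrow> a A = 0)"

definition spartial :: "'n::{finite,linorder} \<Rightarrow> ((real, 'n) vec \<Rightarrow> real) \<Rightarrow> (real, 'n) vec \<Rightarrow> real" where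
  "spartial j g x = deriv (\<lambda>t. g (x + t *\<^sub>R axis j 1)) 0"

definition cpartial :: "'n::{finite,linorder} \<Rightarrow> ((real, 'n) vec \<Rightarrow> 'n clif) \<Rightarrow> (real, 'n) vec \<Rightarrow> 'n clif" where
  "cpartial j f x = (\<lambda>A. spartial j (\<lambda>y. f y A) x)"

fun Ck_on :: "nat \<Rightarrow> ((real, 'n::{finite,linorder}) vec \<Rightarrow> real) \<Rightarrow> ((real, 'n) vec) set \<Rightarrow> bool" where
  "Ck_on 0 g S = continuous_on S g"
| "Ck_on (Suc n) g S = (g differentiable_on S \<and> (\<forall>j. Ck_on n (spartial j g) S))"

definition cCk_on :: "nat \<Rightarrow> ((real, 'n::{finite,linorder}) vec \<Rightarrow> 'n clif) \<Rightarrow> ((real, 'n) vec) set \<Rightarrow> bool" where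
  "cCk_on n f S \<longleftrightarrow> (\<forall>A. Ck_on n (\<lambda>x. f x A) S)"

definition dirac_l :: "((real, 'n::{finite,linorder}) vec \<Rightarrow> 'n clif) \<Rightarrow> (real, 'n) vec \<Rightarrow> 'n clif" where
  "dirac_l f = (\<lambda>x A. \<Sum>j\<in>UNIV. (cbasis j \<odot> cpartial j f x) A)"

definition dirac_r :: "((real, 'n::{finite,linorder}) vec \<Rightarrow> 'n clif) \<Rightarrow> (real, 'n) vec \<Rightarrow> 'n clif" where
  "dirac_r f = (\<lambda>x A. \<Sum>j\<in>UNIV. (cpartial j f x \<odot> cbasis j) A)"

definition laplacian :: "((real, 'n::{finite,linorder}) vec \<Rightarrow> 'n clif) \<Rightarrow> (real, 'n) vec \<Rightarrow> 'n clif" where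
  "laplacian f = (\<lambda>x A. \<Sum>j\<in>UNIV. cpartial j (cpartial j f) x A)"

definition harmonic_on :: "((real, 'n::{finite,linorder}) vec \<Rightarrow> 'n clif) \<Rightarrow> ((real, 'n) vec) set \<Rightarrow> bool" where
  "harmonic_on f S \<longleftrightarrow> (\<forall>x\<in>S. laplacian f x = (\<lambda>A. 0))"

definition biharmonic_on :: "((real, 'n::{finite,linorder}) vec \<Rightarrow> 'n clif) \<Rightarrow> ((real, 'n) vec) set \<Rightarrow> bool" where
  "biharmonic_on f S \<longleftrightarrow> (\<forall>x\<in>S. laplacian (laplacian f) x = (\<lambda>A. 0))"

definition inframonogenic_on :: "((real, 'n::{finite,linorder}) vec \<Rightarrow> 'n clif) \<Rightarrow> ((real, 'n) vec) set \<Rightarrow> bool" where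
  "inframonogenic_on f S \<longleftrightarrow>
     (\<forall>x\<in>S. (\<lambda>A. \<Sum>i\<in>UNIV. \<Sum>j\<in>UNIV. (cbasis i \<odot> cpartial i (cpartial j f) x \<odot> cbasis j) A) = (\<lambda>A. 0))"

definition left_3_monogenic_on :: "((real, 'n::{finite,linorder}) vec \<Rightarrow> 'n clif) \<Rightarrow> ((real, 'n) vec) set \<Rightarrow> bool" where
  "left_3_monogenic_on f S \<longleftrightarrow> (\<forall>x\<in>S. dirac_l (dirac_l (dirac_l f)) x = (\<lambda>A. 0))"

definition right_3_monogenic_on :: "((real, 'n::{finite,linorder}) vec \<Rightarrow> 'n clif) \<Rightarrow> ((real, 'n) vec) set \<Rightarrow> bool" where
  "right_3_monogenic_on f S \<longleftrightarrow> (\<forall>x\<in>S. dirac_r (dirac_r (dirac_r f)) x = (\<lambda>A. 0))"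

end

theory Submission
  imports Defs "HOL-Library.Function_Algebras"
begin

(* Write I F = \<partial> F \<partial> for the inframonogenic operator and c = (-1)^k (2k - m) \<noteq> 0.  The proof
   rests on three explicit formulas, valid at every point of \<Omega>:
     \<partial>\<^sup>3(F x)     = -(\<partial>\<Delta>F) x - 2 I F - c \<Delta>F,
     (x F)\<partial>\<^sup>3     = -x(\<Delta>F \<partial>) - 2 I F - c \<Delta>F,
     \<Delta>\<^sup>2(x F x)  = x(\<Delta>\<^sup>2F)x + 4 x(\<Delta>F \<partial>) + 4 (\<partial>\<Delta>F) x + 8 I F + 4c \<Delta>F.
   If \<Delta>F = 0 they reduce to -2 I F, -2 I F and 8 I F; if I F = 0, then \<partial>\<Delta>F = -(I F)\<partial> = 0,
   \<Delta>F \<partial> = -\<partial>(I F) = 0 and \<Delta>\<^sup>2F = -\<partial>\<partial>\<Delta>F = 0, so they reduce to -c \<Delta>F, -c \<Delta>F and 4c \<Delta>F. *)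

section \<open>The Clifford algebra\<close>

(* Clifford numbers are real-valued functions on index sets; we make them a real vector
   space pointwise, and keep pointwise application out of the default simpset so that
   Clifford-level equations are not unfolded prematurely. *)

instantiation "fun" :: (type, real_vector) real_vector
begin
definition scaleR_fun :: "real \<Rightarrow> ('a \<Rightarrow> 'b) \<Rightarrow> 'a \<Rightarrow> 'b" where
  "scaleR_fun r f = (\<lambda>x. r *\<^sub>R f x)"
instance by standard (auto simp: scaleR_fun_def algebra_simps)
end

declare plus_fun_apply[simp del] zero_fun_apply[simp del] minus_apply[simp del]
  uminus_apply[simp del] times_fun_apply[simp del] one_fun_apply[simp del]

lemma scaleR_fun_apply: "(r *\<^sub>R f) x = r *\<^sub>R f x"
  by (simp add: scaleR_fun_def)

lemma sum_fun_apply: "(\<Sum>i\<in>I. f i) x = (\<Sum>i\<in>I. f i x)"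
  by (induction I rule: infinite_finite_induct) (auto simp: plus_fun_apply zero_fun_apply)

lemmas fun_apply = plus_fun_apply zero_fun_apply minus_apply uminus_apply scaleR_fun_apply sum_fun_apply

lemma zero_clif_lambda: "(\<lambda>A. 0) = (0 :: 'a \<Rightarrow> real)"
  by (simp add: zero_fun_def)

lemma symd_symd[simp]: "symd A (symd A B) = B"
  by (auto simp: symd_def)

lemma symd_empty[simp]: "symd {} A = A" "symd A {} = A" "symd A A = {}"
  by (auto simp: symd_def)

(* The sign of e\<^sub>A e\<^sub>B factors as (-1)^(number of inversions) times (-1)^|A \<inter> B|; both
   factors are multiplicative under symmetric difference, which yields the cocycle identity
   behind associativity. *)

definition sign_card :: "'a set \<Rightarrow> real" where "sign_card P = (-1) ^ card P"

lemma sign_card_symd: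
  assumes "finite P" "finite Q"
  shows "sign_card (symd P Q) = sign_card P * sign_card Q"
proof -
  have s: "card (symd P Q) = card (P - Q) + card (Q - P)"
    unfolding symd_def by (rule card_Un_disjoint) (use assms in auto)
  have p: "card P = card (P \<inter> Q) + card (P - Q)" using card_Int_Diff assms(1) .
  have q: "card Q = card (P \<inter> Q) + card (Q - P)"
    using card_Int_Diff[OF assms(2), of P] by (simp add: Int_commute)
  have "sign_card P * sign_card Q = (-1) ^ (card (symd P Q) + 2 * card (P \<inter> Q))"
    unfolding sign_card_def p q s by (simp add: power_add[symmetric]) (simp add: algebra_simps mult_2)
  also have "\<dots> = sign_card (symd P Q)" by (simp add: sign_card_def power_add power_mult)
  finally show ?thesis by simp
qed

definition inversions :: "'n::linorder set \<Rightarrow> 'n set \<Rightarrow> ('n \<times> 'n) set" where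
  "inversions A B = {(a, b). a \<in> A \<and> b \<in> B \<and> b < a}"

lemma csign_factor: "csign A B = sign_card (inversions A B) * sign_card (A \<inter> B)"
  by (simp add: csign_def sign_card_def inversions_def power_add)

lemma csign_cocycle:
  fixes A B C :: "'n::{finite,linorder} set"
  shows "csign A B * csign (symd A B) C = csign B C * csign A (symd B C)"
proof -
  have inv: "inversions (symd A B) C = symd (inversions A C) (inversions B C)"
    "inversions A (symd B C) = symd (inversions A B) (inversions A C)" for A B C :: "'n set"
    by (auto simp: inversions_def symd_def)
  have int: "symd A B \<inter> C = symd (A \<inter> C) (B \<inter> C)" "A \<inter> symd B C = symd (A \<inter> B) (A \<inter> C)"
    for A B C :: "'n set"
    by (auto simp: symd_def)
  have fin: "finite (X :: ('n \<times> 'n) set)" "finite (Y :: 'n set)" for X Y by auto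
  show ?thesis
    unfolding csign_factor inv int by (simp add: sign_card_symd fin)
qed

lemma sum_UNIV_symd_reindex:
  fixes f :: "'n::finite set \<Rightarrow> 'b::comm_monoid_add"
  shows "(\<Sum>X\<in>UNIV. f X) = (\<Sum>B\<in>UNIV. f (symd A B))"
  by (rule sum.reindex_bij_witness[of _ "symd A" "symd A"]) auto

lemma cmul_assoc: "(a \<odot> b) \<odot> c = a \<odot> (b \<odot> c)"
proof
  fix D
  have "((a \<odot> b) \<odot> c) D = (\<Sum>X\<in>UNIV. \<Sum>A\<in>UNIV. a A * b (symd A X) * csign A (symd A X) * c (symd X D) * csign X (symd X D))"
    by (simp add: cmul_def sum_distrib_right)
  also have "\<dots> = (\<Sum>A\<in>UNIV. \<Sum>X\<in>UNIV. a A * b (symd A X) * csign A (symd A X) * c (symd X D) * csign X (symd X D))"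
    by (rule sum.swap)
  also have "\<dots> = (\<Sum>A\<in>UNIV. \<Sum>B\<in>UNIV. a A * b B * csign A B * c (symd (symd A B) D) * csign (symd A B) (symd (symd A B) D))"
  proof (rule sum.cong[OF refl])
    fix A :: "'a set"
    show "(\<Sum>X\<in>UNIV. a A * b (symd A X) * csign A (symd A X) * c (symd X D) * csign X (symd X D)) =
      (\<Sum>B\<in>UNIV. a A * b B * csign A B * c (symd (symd A B) D) * csign (symd A B) (symd (symd A B) D))"
      by (rule trans[OF sum_UNIV_symd_reindex[where A=A]]) simp
  qed
  also have "\<dots> = (\<Sum>A\<in>UNIV. \<Sum>B\<in>UNIV. a A * (b B * c (symd B (symd A D)) * csign B (symd B (symd A D))) * csign A (symd A D))"
  proof (intro sum.cong refl)
    fix A B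
    have e1: "symd (symd A B) D = symd B (symd A D)" by (auto simp: symd_def)
    have "csign A B * csign (symd A B) (symd B (symd A D)) = csign B (symd B (symd A D)) * csign A (symd A D)"
      using csign_cocycle[of A B "symd B (symd A D)"] by simp
    thus "a A * b B * csign A B * c (symd (symd A B) D) * csign (symd A B) (symd (symd A B) D) =
      a A * (b B * c (symd B (symd A D)) * csign B (symd B (symd A D))) * csign A (symd A D)"
      unfolding e1 by (simp add: algebra_simps)
  qed
  also have "\<dots> = (a \<odot> (b \<odot> c)) D"
    by (simp add: cmul_def sum_distrib_left sum_distrib_right)
  finally show "((a \<odot> b) \<odot> c) D = (a \<odot> (b \<odot> c)) D" .
qed

lemma cmul_add_left: "(a + b) \<odot> c = a \<odot> c + b \<odot> c"
  by (auto simp: cmul_def algebra_simps sum.distrib fun_eq_iff fun_apply)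
lemma cmul_add_right: "c \<odot> (a + b) = c \<odot> a + c \<odot> b"
  by (auto simp: cmul_def algebra_simps sum.distrib fun_eq_iff fun_apply)
lemma cmul_minus_left: "(- a) \<odot> c = - (a \<odot> c)"
  by (auto simp: cmul_def sum_negf fun_eq_iff fun_apply)
lemma cmul_minus_right: "c \<odot> (- a) = - (c \<odot> a)"
  by (auto simp: cmul_def sum_negf fun_eq_iff fun_apply)
lemma cmul_zero[simp]: "0 \<odot> c = 0" "c \<odot> 0 = 0"
  by (auto simp: cmul_def fun_eq_iff fun_apply)
lemma cmul_scaleR_left: "(r *\<^sub>R a) \<odot> c = r *\<^sub>R (a \<odot> c)"
  by (auto simp: cmul_def algebra_simps sum_distrib_left fun_eq_iff fun_apply)
lemma cmul_scaleR_right: "c \<odot> (r *\<^sub>R a) = r *\<^sub>R (c \<odot> a)"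
  by (auto simp: cmul_def algebra_simps sum_distrib_left fun_eq_iff fun_apply)
lemma cmul_sum_left: "(\<Sum>i\<in>I. f i) \<odot> c = (\<Sum>i\<in>I. f i \<odot> c)"
  by (induction I rule: infinite_finite_induct) (auto simp: cmul_add_left)
lemma cmul_sum_right: "c \<odot> (\<Sum>i\<in>I. f i) = (\<Sum>i\<in>I. c \<odot> f i)"
  by (induction I rule: infinite_finite_induct) (auto simp: cmul_add_right)

definition cunit :: "'n::{finite,linorder} clif" where "cunit = (\<lambda>A. if A = {} then 1 else 0)"

lemma sum_UNIV_single:
  fixes f :: "'a::finite \<Rightarrow> 'b::comm_monoid_add"
  assumes "\<And>A. A \<noteq> a \<Longrightarrow> f A = 0"
  shows "(\<Sum>A\<in>UNIV. f A) = f a"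
  using sum.mono_neutral_right[of UNIV "{a}" f] assms by auto

lemma cunit_mul: "cunit \<odot> a = a"
proof
  fix C show "(cunit \<odot> a) C = a C"
    unfolding cmul_def cunit_def by (subst sum_UNIV_single[where a="{}"]) (auto simp: csign_def)
qed

lemma mul_cunit: "a \<odot> cunit = a"
proof
  fix C
  have "(a \<odot> cunit) C = (\<Sum>A\<in>UNIV. if A = C then a A * csign A (symd A C) else 0)"
    unfolding cmul_def cunit_def by (rule sum.cong) (auto simp: symd_def)
  thus "(a \<odot> cunit) C = a C" by (simp add: symd_def csign_def)
qed

lemma cbasis_mul_apply: "(cbasis j \<odot> a) C = csign {j} (symd {j} C) * a (symd {j} C)"
  unfolding cmul_def cbasis_def by (subst sum_UNIV_single[where a="{j}"]) auto

lemma mul_cbasis_apply: "(a \<odot> cbasis j) C = csign (symd C {j}) {j} * a (symd C {j})"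
proof -
  have "(a \<odot> cbasis j) C = (\<Sum>A\<in>UNIV. if A = symd C {j} then a A * csign A {j} else 0)"
    unfolding cmul_def cbasis_def by (rule sum.cong) (auto simp: symd_def)
  thus ?thesis by (simp add: sum.delta)
qed

lemma csign_singletons: "csign {i} {j} = (if i = j then -1 else if j < i then -1 else 1)"
proof -
  have "{(a, b). a = i \<and> b = j \<and> b < a} = (if j < i then {(i, j)} else {})" by auto
  thus ?thesis by (auto simp: csign_def)
qed

lemma cbasis_sq: "cbasis j \<odot> cbasis j = - cunit"
proof
  fix C
  have a: "symd {j} C = {j} \<longleftrightarrow> C = {}" by (metis symd_symd symd_empty(2))
  show "(cbasis j \<odot> cbasis j) C = (- cunit) C"
    unfolding cbasis_mul_apply by (simp add: cbasis_def a csign_singletons cunit_def uminus_apply)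
qed

lemma cbasis_anticomm_distinct:
  assumes "i \<noteq> j"
  shows "cbasis i \<odot> cbasis j + cbasis j \<odot> cbasis i = 0"
proof
  fix C
  have ij: "symd {i} {j} = {i, j}" "symd {j} {i} = {i, j}" using assms by (auto simp: symd_def)
  have a: "symd {i} C = {j} \<longleftrightarrow> C = {i, j}" "symd {j} C = {i} \<longleftrightarrow> C = {i, j}"
    by (metis symd_symd ij(1), metis symd_symd ij(2))
  have c: "symd {i} {i, j} = {j}" "symd {j} {i, j} = {i}" by (metis symd_symd ij(1), metis symd_symd ij(2))
  have b: "csign {i} {j} = - csign {j} {i}" using assms by (auto simp: csign_singletons)
  show "(cbasis i \<odot> cbasis j + cbasis j \<odot> cbasis i) C = 0 C"
    unfolding plus_fun_apply cbasis_mul_apply zero_fun_apply by (simp add: cbasis_def a b c)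
qed

lemma cbasis_anticomm: "cbasis i \<odot> cbasis j + cbasis j \<odot> cbasis i = (if i = j then -2 *\<^sub>R cunit else 0)"
  using cbasis_anticomm_distinct[of i j] by (simp add: cbasis_sq scaleR_2)

lemma cbasis_anticomm_left:
  "cbasis i \<odot> (cbasis j \<odot> X) + cbasis j \<odot> (cbasis i \<odot> X) = (if i = j then -2 *\<^sub>R X else 0)"
proof -
  have "cbasis i \<odot> (cbasis j \<odot> X) + cbasis j \<odot> (cbasis i \<odot> X) = (cbasis i \<odot> cbasis j + cbasis j \<odot> cbasis i) \<odot> X"
    by (simp only: cmul_assoc cmul_add_left)
  thus ?thesis unfolding cbasis_anticomm by (simp add: cmul_scaleR_left cmul_minus_left cunit_mul)
qed

lemma cbasis_anticomm_right:
  "(X \<odot> cbasis i) \<odot> cbasis j + (X \<odot> cbasis j) \<odot> cbasis i = (if i = j then -2 *\<^sub>R X else 0)"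
proof -
  have "(X \<odot> cbasis i) \<odot> cbasis j + (X \<odot> cbasis j) \<odot> cbasis i = X \<odot> (cbasis i \<odot> cbasis j + cbasis j \<odot> cbasis i)"
    by (simp only: cmul_assoc cmul_add_right)
  thus ?thesis unfolding cbasis_anticomm by (simp add: cmul_scaleR_right cmul_minus_right mul_cunit)
qed

(* The map X \<mapsto> \<Sum>\<^sub>j e\<^sub>j X e\<^sub>j acts on k-vectors as multiplication by
   csig m k = (-1)^k (2k - m), which is nonzero exactly when 2k \<noteq> m. *)

definition sandwich :: "'n::{finite,linorder} clif \<Rightarrow> 'n clif" where
  "sandwich X = (\<Sum>j\<in>UNIV. cbasis j \<odot> (X \<odot> cbasis j))"

definition csig :: "nat \<Rightarrow> nat \<Rightarrow> real" where
  "csig m k = (-1) ^ k * (2 * real k - real m)"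

lemma csig_nonzero: "2 * k \<noteq> m \<Longrightarrow> csig m k \<noteq> 0"
  by (simp add: csig_def)

lemma card_below_above:
  fixes C :: "'n::{finite,linorder} set"
  shows "card {b\<in>C. b < j} + card {a\<in>C. j < a} + (if j \<in> C then 1 else 0) = card C"
proof -
  have e: "C = ({b\<in>C. b < j} \<union> {a\<in>C. j < a}) \<union> (C \<inter> {j})" by auto
  have "card C = card ({b\<in>C. b < j} \<union> {a\<in>C. j < a}) + card (C \<inter> {j})"
    by (subst e, rule card_Un_disjoint) auto
  also have "card ({b\<in>C. b < j} \<union> {a\<in>C. j < a}) = card {b\<in>C. b < j} + card {a\<in>C. j < a}"
    by (rule card_Un_disjoint) auto
  also have "card (C \<inter> {j}) = (if j \<in> C then 1 else 0)" by auto
  finally show ?thesis by simp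
qed

lemma cbasis_conj_apply:
  fixes X :: "'n::{finite,linorder} clif"
  shows "((cbasis j \<odot> X) \<odot> cbasis j) C = (if j \<in> C then (-1) ^ card C else - ((-1) ^ card C)) * X C"
proof -
  have e: "symd {j} (symd C {j}) = C" by (auto simp: symd_def)
  have i1: "{(a, b). a \<in> {j} \<and> b \<in> C \<and> b < a} = (\<lambda>b. (j, b)) ` {b\<in>C. b < j}" by auto
  have i2: "{(a, b). a \<in> symd C {j} \<and> b \<in> {j} \<and> b < a} = (\<lambda>a. (a, j)) ` {a\<in>C. j < a}"
    by (auto simp: symd_def)
  have c1: "card {(a, b). a \<in> {j} \<and> b \<in> C \<and> b < a} = card {b\<in>C. b < j}"
    unfolding i1 by (rule card_image) (auto simp: inj_on_def)
  have c2: "card {(a, b). a \<in> symd C {j} \<and> b \<in> {j} \<and> b < a} = card {a\<in>C. j < a}"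
    unfolding i2 by (rule card_image) (auto simp: inj_on_def)
  have c3: "card ({j} \<inter> C) = (if j \<in> C then 1 else 0)" by auto
  have "symd C {j} \<inter> {j} = (if j \<in> C then {} else {j})" by (auto simp: symd_def)
  hence c4: "card (symd C {j} \<inter> {j}) = (if j \<in> C then 0 else 1)" by simp
  have "csign (symd C {j}) {j} * csign {j} C =
     (-1) ^ (card {b\<in>C. b < j} + card {a\<in>C. j < a} + (if j \<in> C then 1 else 0) + (if j \<in> C then 0 else 1))"
    unfolding csign_def c1 c2 c3 c4 by (simp add: power_add algebra_simps)
  also have "\<dots> = (if j \<in> C then (-1) ^ card C else - ((-1) ^ card C))"
    unfolding card_below_above[of C j, symmetric] by (auto simp: power_add)
  finally have s: "csign (symd C {j}) {j} * csign {j} C = (if j \<in> C then (-1) ^ card C else - ((-1) ^ card C))" .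
  show ?thesis unfolding mul_cbasis_apply cbasis_mul_apply e using s by (simp add: algebra_simps)
qed

lemma sandwich_kvector:
  fixes X :: "'n::{finite,linorder} clif"
  assumes "is_kvector k X"
  shows "sandwich X = csig CARD('n) k *\<^sub>R X"
proof
  fix C :: "'n set"
  let ?s = "\<lambda>j. if j \<in> C then (-1) ^ card C else - ((-1) ^ card C) :: real"
  have "(\<Sum>j\<in>UNIV. ?s j) = (\<Sum>j\<in>C. (-1) ^ card C) + (\<Sum>j\<in>UNIV - C. - ((-1) ^ card C))"
    by (simp add: sum.If_cases Int_absorb1 Diff_eq)
  also have "\<dots> = (-1) ^ card C * (real (card C) - real (card (UNIV - C)))"
    by (simp add: algebra_simps)
  also have "real (card (UNIV - C)) = real CARD('n) - real (card C)"
    by (simp add: card_Diff_subset card_mono of_nat_diff)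
  finally have s: "(\<Sum>j\<in>UNIV. ?s j) = (-1) ^ card C * (2 * real (card C) - real CARD('n))"
    by (simp add: algebra_simps)
  have "sandwich X C = (\<Sum>j\<in>UNIV. ?s j) * X C"
    by (simp add: sandwich_def sum_fun_apply cmul_assoc[symmetric] cbasis_conj_apply sum_distrib_right)
  thus "sandwich X C = (csig CARD('n) k *\<^sub>R X) C"
    using assms unfolding s is_kvector_def csig_def by (cases "card C = k") (auto simp: scaleR_fun_apply)
qed

(* For a family Z symmetric in its two indices (in the application: second partial
   derivatives), \<Sum>\<^sub>i\<^sub>,\<^sub>j e\<^sub>i e\<^sub>j Z\<^sub>i\<^sub>j = -\<Sum>\<^sub>i Z\<^sub>i\<^sub>i; this is \<partial>\<partial> = -\<Delta>. *)

lemma sum_cbasis_pairs_left: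
  assumes sym: "\<And>i j. Z i j = Z j i"
  shows "(\<Sum>i\<in>UNIV. \<Sum>j\<in>UNIV. cbasis i \<odot> (cbasis j \<odot> Z i j)) = - (\<Sum>i\<in>(UNIV::'n::{finite,linorder} set). Z i i)"
proof -
  let ?S = "(\<Sum>i\<in>UNIV. \<Sum>j\<in>UNIV. cbasis i \<odot> (cbasis j \<odot> Z i j)) :: 'n clif"
  have "?S = (\<Sum>j\<in>UNIV. \<Sum>i\<in>UNIV. cbasis i \<odot> (cbasis j \<odot> Z j i))"
    by (subst sum.swap) (simp only: sym)
  hence "?S + ?S = (\<Sum>i\<in>UNIV. \<Sum>j\<in>UNIV. cbasis i \<odot> (cbasis j \<odot> Z i j) + cbasis j \<odot> (cbasis i \<odot> Z i j))"
    by (simp only: sum.distrib)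
  also have "\<dots> = (\<Sum>i\<in>UNIV. -2 *\<^sub>R Z i i)"
    by (simp only: cbasis_anticomm_left) simp
  finally have "?S + ?S = -2 *\<^sub>R (\<Sum>i\<in>UNIV. Z i i)" by (simp add: scaleR_sum_right)
  hence "2 *\<^sub>R ?S = -2 *\<^sub>R (\<Sum>i\<in>UNIV. Z i i)" by (simp add: scaleR_2)
  hence "(1/2) *\<^sub>R (2 *\<^sub>R ?S) = (1/2) *\<^sub>R (-2 *\<^sub>R (\<Sum>i\<in>UNIV. Z i i))" by simp
  thus ?thesis by simp
qed

lemma sum_cbasis_pairs_right:
  assumes sym: "\<And>i j. Z i j = Z j i"
  shows "(\<Sum>i\<in>UNIV. \<Sum>j\<in>UNIV. (Z i j \<odot> cbasis i) \<odot> cbasis j) = - (\<Sum>i\<in>(UNIV::'n::{finite,linorder} set). Z i i)"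
proof -
  let ?S = "(\<Sum>i\<in>UNIV. \<Sum>j\<in>UNIV. (Z i j \<odot> cbasis i) \<odot> cbasis j) :: 'n clif"
  have "?S = (\<Sum>j\<in>UNIV. \<Sum>i\<in>UNIV. (Z j i \<odot> cbasis i) \<odot> cbasis j)"
    by (subst sum.swap) (simp only: sym)
  hence "?S + ?S = (\<Sum>i\<in>UNIV. \<Sum>j\<in>UNIV. (Z i j \<odot> cbasis i) \<odot> cbasis j + (Z i j \<odot> cbasis j) \<odot> cbasis i)"
    by (simp only: sum.distrib)
  also have "\<dots> = (\<Sum>i\<in>UNIV. -2 *\<^sub>R Z i i)"
    by (simp only: cbasis_anticomm_right) simp
  finally have "?S + ?S = -2 *\<^sub>R (\<Sum>i\<in>UNIV. Z i i)" by (simp add: scaleR_sum_right)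
  hence "2 *\<^sub>R ?S = -2 *\<^sub>R (\<Sum>i\<in>UNIV. Z i i)" by (simp add: scaleR_2)
  hence "(1/2) *\<^sub>R (2 *\<^sub>R ?S) = (1/2) *\<^sub>R (-2 *\<^sub>R (\<Sum>i\<in>UNIV. Z i i))" by simp
  thus ?thesis by simp
qed

(* Moving a Dirac-type sum \<Sum>\<^sub>j e\<^sub>j \<cdot> Y\<^sub>j through the sandwich map produces a
   right-hand correction term; this is the commutation rule \<partial>(\<Sum> e\<^sub>j F e\<^sub>j) = -\<Sum> e\<^sub>j (\<partial>F) e\<^sub>j - 2 F\<partial>. *)

lemma sum_cbasis_sandwich_left:
  "(\<Sum>j\<in>UNIV. cbasis j \<odot> sandwich (Y j))
     = - sandwich (\<Sum>j\<in>UNIV. cbasis j \<odot> Y j) - 2 *\<^sub>R (\<Sum>j\<in>(UNIV::'n::{finite,linorder} set). Y j \<odot> cbasis j)"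
proof -
  have "(\<Sum>j\<in>UNIV. cbasis j \<odot> sandwich (Y j)) = (\<Sum>j\<in>UNIV. \<Sum>k\<in>UNIV. cbasis j \<odot> (cbasis k \<odot> (Y j \<odot> cbasis k)))"
    by (simp add: sandwich_def cmul_sum_right)
  also have "\<dots> = (\<Sum>j\<in>UNIV. \<Sum>k\<in>UNIV. (if j = k then -2 *\<^sub>R (Y j \<odot> cbasis k) else 0) - cbasis k \<odot> (cbasis j \<odot> (Y j \<odot> cbasis k)))"
    by (intro sum.cong refl) (simp add: cbasis_anticomm_left[symmetric])
  also have "\<dots> = - 2 *\<^sub>R (\<Sum>j\<in>UNIV. Y j \<odot> cbasis j) - (\<Sum>k\<in>UNIV. \<Sum>j\<in>UNIV. cbasis k \<odot> ((cbasis j \<odot> Y j) \<odot> cbasis k))"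
    by (simp add: sum_subtractf) (subst sum.swap, simp add: cmul_assoc scaleR_sum_right sum_negf)
  also have "(\<Sum>k\<in>UNIV. \<Sum>j\<in>UNIV. cbasis k \<odot> ((cbasis j \<odot> Y j) \<odot> cbasis k)) = sandwich (\<Sum>j\<in>UNIV. cbasis j \<odot> Y j)"
    by (simp add: sandwich_def cmul_sum_right cmul_sum_left)
  finally show ?thesis by simp
qed

lemma sum_cbasis_sandwich_right:
  "(\<Sum>j\<in>UNIV. sandwich (Y j) \<odot> cbasis j)
     = - sandwich (\<Sum>j\<in>UNIV. Y j \<odot> cbasis j) - 2 *\<^sub>R (\<Sum>j\<in>(UNIV::'n::{finite,linorder} set). cbasis j \<odot> Y j)"
proof -
  have "(\<Sum>j\<in>UNIV. sandwich (Y j) \<odot> cbasis j) = (\<Sum>j\<in>UNIV. \<Sum>k\<in>UNIV. ((cbasis k \<odot> Y j) \<odot> cbasis k) \<odot> cbasis j)"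
    by (simp add: sandwich_def cmul_sum_left cmul_assoc)
  also have "\<dots> = (\<Sum>j\<in>UNIV. \<Sum>k\<in>UNIV. (if k = j then -2 *\<^sub>R (cbasis k \<odot> Y j) else 0) - ((cbasis k \<odot> Y j) \<odot> cbasis j) \<odot> cbasis k)"
    by (intro sum.cong refl) (simp add: cbasis_anticomm_right[symmetric])
  also have "\<dots> = - 2 *\<^sub>R (\<Sum>j\<in>UNIV. cbasis j \<odot> Y j) - (\<Sum>k\<in>UNIV. \<Sum>j\<in>UNIV. cbasis k \<odot> ((Y j \<odot> cbasis j) \<odot> cbasis k))"
    by (simp add: sum_subtractf) (subst sum.swap, simp add: cmul_assoc scaleR_sum_right sum_negf)
  also have "(\<Sum>k\<in>UNIV. \<Sum>j\<in>UNIV. cbasis k \<odot> ((Y j \<odot> cbasis j) \<odot> cbasis k)) = sandwich (\<Sum>j\<in>UNIV. Y j \<odot> cbasis j)"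
    by (simp add: sandwich_def cmul_sum_right cmul_sum_left)
  finally show ?thesis by simp
qed

section \<open>Partial derivatives of real functions\<close>

lemma spartial_intro:
  fixes g :: "(real, 'n::{finite,linorder}) vec \<Rightarrow> real"
  assumes "((\<lambda>t. g (x + t *\<^sub>R axis j 1)) has_real_derivative D) (at 0)"
  shows "spartial j g x = D"
  unfolding spartial_def using assms by (rule DERIV_imp_deriv)

lemma has_real_derivative_along_line:
  fixes g :: "'a::real_normed_vector \<Rightarrow> real"
  assumes "g differentiable (at (y + s *\<^sub>R v))"
  shows "((\<lambda>t. g (y + t *\<^sub>R v)) has_real_derivative frechet_derivative g (at (y + s *\<^sub>R v)) v) (at s)"
proof -
  let ?g' = "frechet_derivative g (at (y + s *\<^sub>R v))"
  have g: "(g has_derivative ?g') (at (y + s *\<^sub>R v))"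
    using assms frechet_derivative_works by blast
  have l: "((\<lambda>t. y + t *\<^sub>R v) has_derivative (\<lambda>t. t *\<^sub>R v)) (at s)"
    by (auto intro!: derivative_eq_intros)
  have c: "((\<lambda>t. g (y + t *\<^sub>R v)) has_derivative (\<lambda>t. ?g' (t *\<^sub>R v))) (at s)"
    using has_derivative_compose[OF l g] by simp
  have lin: "linear ?g'" using g has_derivative_linear by blast
  show ?thesis
    by (rule has_derivative_imp_has_field_derivative[OF c]) (simp add: linear_scale[OF lin])
qed

lemma spartial_along_line:
  fixes g :: "(real, 'n::{finite,linorder}) vec \<Rightarrow> real"
  assumes "g differentiable (at (y + s *\<^sub>R axis j 1))"
  shows "((\<lambda>t. g (y + t *\<^sub>R axis j 1)) has_real_derivative spartial j g (y + s *\<^sub>R axis j 1)) (at s)"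
proof -
  have "spartial j g (y + s *\<^sub>R axis j 1) = frechet_derivative g (at (y + s *\<^sub>R axis j 1)) (axis j 1)"
    using has_real_derivative_along_line[of g "y + s *\<^sub>R axis j 1" 0 "axis j 1"] assms
    by (intro spartial_intro) simp
  thus ?thesis using has_real_derivative_along_line[OF assms] by simp
qed

lemma spartial_has_derivative:
  fixes g :: "(real, 'n::{finite,linorder}) vec \<Rightarrow> real"
  assumes "g differentiable (at x)"
  shows "((\<lambda>t. g (x + t *\<^sub>R axis j 1)) has_real_derivative spartial j g x) (at 0)"
  using spartial_along_line[of g x 0 j] assms by simp

lemma spartial_local:
  fixes f g :: "(real, 'n::{finite,linorder}) vec \<Rightarrow> real"
  assumes "open \<Omega>" "x \<in> \<Omega>" "\<And>y. y \<in> \<Omega> \<Longrightarrow> f y = g y"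
  shows "spartial j f x = spartial j g x"
proof -
  have "open {t::real. x + t *\<^sub>R axis j 1 \<in> \<Omega>}"
    using open_vimage[OF assms(1), of "\<lambda>t. x + t *\<^sub>R axis j 1"] by (simp add: vimage_def continuous_intros)
  hence "\<forall>\<^sub>F t in nhds 0. x + t *\<^sub>R axis j 1 \<in> \<Omega>"
    using eventually_nhds_in_open[of _ 0] assms(2) by fastforce
  hence "\<forall>\<^sub>F t in nhds 0. f (x + t *\<^sub>R axis j 1) = g (x + t *\<^sub>R axis j 1)"
    by (rule eventually_mono) (simp add: assms(3))
  thus ?thesis unfolding spartial_def by (rule deriv_cong_ev) simp
qed

lemma spartial_coord: "spartial j (\<lambda>y. y $ i) x = (if i = j then 1 else 0)"
  by (rule spartial_intro) (auto intro!: derivative_eq_intros simp: axis_def)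

lemma spartial_add:
  "g differentiable (at x) \<Longrightarrow> h differentiable (at x) \<Longrightarrow>
   spartial j (\<lambda>y. g y + h y) x = spartial j g x + spartial j h x"
  by (rule spartial_intro) (intro DERIV_add spartial_has_derivative)

lemma spartial_mult:
  "g differentiable (at x) \<Longrightarrow> h differentiable (at x) \<Longrightarrow>
   spartial j (\<lambda>y. g y * h y) x = spartial j g x * h x + g x * spartial j h x"
  by (rule spartial_intro) (auto intro!: derivative_eq_intros spartial_has_derivative)

lemma mvt_symmetric:
  fixes f f' :: "real \<Rightarrow> real"
  assumes "h \<noteq> 0" "\<And>t. \<bar>t\<bar> \<le> \<bar>h\<bar> \<Longrightarrow> (f has_real_derivative f' t) (at t)"
  shows "\<exists>\<xi>. \<bar>\<xi>\<bar> \<le> \<bar>h\<bar> \<and> f h - f 0 = h * f' \<xi>"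
proof (cases "h > 0")
  case True
  have d: "\<And>x. 0 \<le> x \<Longrightarrow> x \<le> h \<Longrightarrow> DERIV f x :> f' x" using assms(2) True by auto
  from MVT2[OF True d] obtain z where "0 < z" "z < h" "f h - f 0 = (h - 0) * f' z" by blast
  thus ?thesis by (intro exI[of _ z]) auto
next
  case False
  hence h: "h < 0" using assms(1) by simp
  have d: "\<And>x. h \<le> x \<Longrightarrow> x \<le> 0 \<Longrightarrow> DERIV f x :> f' x" using assms(2) h by auto
  from MVT2[OF h d] obtain z where "h < z" "z < 0" "f 0 - f h = (0 - h) * f' z" by blast
  thus ?thesis by (intro exI[of _ z]) (auto simp: algebra_simps)
qed

lemma dist_two_axis_steps:
  fixes x :: "(real, 'n::{finite,linorder}) vec"
  assumes "\<bar>a\<bar> \<le> h" "\<bar>b\<bar> \<le> h"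
  shows "dist (x + a *\<^sub>R axis i 1 + b *\<^sub>R axis j 1) x \<le> 2 * h"
proof -
  have "dist (x + a *\<^sub>R axis i 1 + b *\<^sub>R axis j 1) x = norm (a *\<^sub>R axis i 1 + b *\<^sub>R axis j (1::real))"
    by (simp add: dist_norm)
  also have "\<dots> \<le> norm (a *\<^sub>R axis i (1::real)) + norm (b *\<^sub>R axis j (1::real))" by (rule norm_triangle_ineq)
  also have "\<dots> = \<bar>a\<bar> + \<bar>b\<bar>" by simp
  finally show ?thesis using assms by simp
qed

lemma axis_steps_in_ball:
  fixes x :: "(real, 'n::{finite,linorder}) vec"
  assumes "\<bar>a\<bar> \<le> \<bar>h\<bar>" "\<bar>b\<bar> \<le> \<bar>h\<bar>" "2 * \<bar>h\<bar> < r"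
  shows "x + a *\<^sub>R axis i 1 + b *\<^sub>R axis j 1 \<in> ball x r"
  using dist_two_axis_steps[of a "\<bar>h\<bar>" b x i j] assms by (simp add: dist_commute)

(* Two applications of the mean value theorem: the mixed second difference of g with step h
   equals h^2 times the mixed partial derivative \<partial>_j \<partial>_i g at some point within 2|h| of x. *)

lemma second_difference_mvt:
  fixes g :: "(real, 'n::{finite,linorder}) vec \<Rightarrow> real"
  assumes op: "open \<Omega>" and dg: "g differentiable_on \<Omega>" and dgi: "spartial i g differentiable_on \<Omega>"
    and bl: "ball x r \<subseteq> \<Omega>" and h: "h \<noteq> 0" "2 * \<bar>h\<bar> < r"
  shows "\<exists>p. dist p x \<le> 2 * \<bar>h\<bar> \<and>
    g (x + h *\<^sub>R axis i 1 + h *\<^sub>R axis j 1) - g (x + h *\<^sub>R axis i 1) - g (x + h *\<^sub>R axis j 1) + g x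
      = h * h * spartial j (spartial i g) p"
proof -
  let ?u = "axis i (1::real) :: (real, 'n) vec" and ?v = "axis j (1::real) :: (real, 'n) vec"
  have inO: "x + a *\<^sub>R ?u + b *\<^sub>R ?v \<in> \<Omega>" if "\<bar>a\<bar> \<le> \<bar>h\<bar>" "\<bar>b\<bar> \<le> \<bar>h\<bar>" for a b
    using axis_steps_in_ball[OF that h(2)] bl by blast
  have dgat: "g differentiable (at y)" if "y \<in> \<Omega>" for y
    using dg op that differentiable_on_eq_differentiable_at by blast
  have dgiat: "spartial i g differentiable (at y)" if "y \<in> \<Omega>" for y
    using dgi op that differentiable_on_eq_differentiable_at by blast
  define \<phi> where "\<phi> t = g (x + h *\<^sub>R ?v + t *\<^sub>R ?u) - g (x + t *\<^sub>R ?u)" for t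
  define \<phi>' where "\<phi>' t = spartial i g (x + h *\<^sub>R ?v + t *\<^sub>R ?u) - spartial i g (x + t *\<^sub>R ?u)" for t
  have "(\<phi> has_real_derivative \<phi>' t) (at t)" if "\<bar>t\<bar> \<le> \<bar>h\<bar>" for t
  proof -
    have p1: "x + h *\<^sub>R ?v + t *\<^sub>R ?u \<in> \<Omega>" using inO[of t h] that by (simp add: algebra_simps)
    have p2: "x + t *\<^sub>R ?u \<in> \<Omega>" using inO[of t 0] that by simp
    show ?thesis unfolding \<phi>_def[abs_def] \<phi>'_def
      by (intro DERIV_diff spartial_along_line dgat p1 p2)
  qed
  from mvt_symmetric[OF h(1) this] obtain \<xi> where xi: "\<bar>\<xi>\<bar> \<le> \<bar>h\<bar>" "\<phi> h - \<phi> 0 = h * \<phi>' \<xi>" by blast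
  define \<psi> where "\<psi> s = spartial i g (x + \<xi> *\<^sub>R ?u + s *\<^sub>R ?v)" for s
  have "(\<psi> has_real_derivative spartial j (spartial i g) (x + \<xi> *\<^sub>R ?u + s *\<^sub>R ?v)) (at s)" if "\<bar>s\<bar> \<le> \<bar>h\<bar>" for s
    unfolding \<psi>_def[abs_def]
    by (intro spartial_along_line[where y="x + \<xi> *\<^sub>R ?u"] dgiat inO xi(1) that)
  from mvt_symmetric[OF h(1) this] obtain \<eta> where eta: "\<bar>\<eta>\<bar> \<le> \<bar>h\<bar>"
    "\<psi> h - \<psi> 0 = h * spartial j (spartial i g) (x + \<xi> *\<^sub>R ?u + \<eta> *\<^sub>R ?v)" by blast
  have e1: "\<phi>' \<xi> = \<psi> h - \<psi> 0" unfolding \<phi>'_def \<psi>_def by (simp add: algebra_simps)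
  have e2: "\<phi> h - \<phi> 0 = g (x + h *\<^sub>R ?u + h *\<^sub>R ?v) - g (x + h *\<^sub>R ?u) - g (x + h *\<^sub>R ?v) + g x"
    unfolding \<phi>_def by (simp add: algebra_simps)
  show ?thesis
  proof (intro exI conjI)
    show "dist (x + \<xi> *\<^sub>R ?u + \<eta> *\<^sub>R ?v) x \<le> 2 * \<bar>h\<bar>" by (rule dist_two_axis_steps) (use xi eta in auto)
    show "g (x + h *\<^sub>R ?u + h *\<^sub>R ?v) - g (x + h *\<^sub>R ?u) - g (x + h *\<^sub>R ?v) + g x =
      h * h * spartial j (spartial i g) (x + \<xi> *\<^sub>R ?u + \<eta> *\<^sub>R ?v)"
      using xi(2) eta(2) e1 e2 by simp
  qed
qed

(* Schwarz's theorem: if the mixed partials were different at x, by continuity they would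
   stay separated near x; but the symmetric second difference equals h^2 times either of them
   at suitable nearby points. *)

lemma spartial_commute:
  fixes g :: "(real, 'n::{finite,linorder}) vec \<Rightarrow> real"
  assumes op: "open \<Omega>" and x: "x \<in> \<Omega>" and dg: "g differentiable_on \<Omega>"
    and dgi: "\<And>k. spartial k g differentiable_on \<Omega>"
    and cont: "\<And>k l. continuous_on \<Omega> (spartial k (spartial l g))"
  shows "spartial i (spartial j g) x = spartial j (spartial i g) x"
proof (rule ccontr)
  let ?a = "spartial j (spartial i g) x" and ?b = "spartial i (spartial j g) x"
  assume ne: "?b \<noteq> ?a"
  define e where "e = \<bar>?a - ?b\<bar> / 2"
  have e: "e > 0" using ne unfolding e_def by simp
  obtain d1 where d1: "d1 > 0" "\<And>y. y \<in> \<Omega> \<Longrightarrow> dist y x < d1 \<Longrightarrow> dist (spartial j (spartial i g) y) ?a < e"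
    using cont[of j i] x e unfolding continuous_on_iff by meson
  obtain d2 where d2: "d2 > 0" "\<And>y. y \<in> \<Omega> \<Longrightarrow> dist y x < d2 \<Longrightarrow> dist (spartial i (spartial j g) y) ?b < e"
    using cont[of i j] x e unfolding continuous_on_iff by meson
  obtain r where r: "r > 0" "ball x r \<subseteq> \<Omega>" using op x open_contains_ball by blast
  define h where "h = min (min d1 d2) r / 4"
  have h: "h > 0" "2 * \<bar>h\<bar> < r" "2 * \<bar>h\<bar> < d1" "2 * \<bar>h\<bar> < d2" "h \<noteq> 0"
    using d1 d2 r unfolding h_def by auto
  obtain p where p: "dist p x \<le> 2 * \<bar>h\<bar>" "g (x + h *\<^sub>R axis i 1 + h *\<^sub>R axis j 1) - g (x + h *\<^sub>R axis i 1) - g (x + h *\<^sub>R axis j 1) + g x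
      = h * h * spartial j (spartial i g) p"
    using second_difference_mvt[OF op dg dgi r(2) h(5) h(2)] by blast
  obtain q where q: "dist q x \<le> 2 * \<bar>h\<bar>" "g (x + h *\<^sub>R axis j 1 + h *\<^sub>R axis i 1) - g (x + h *\<^sub>R axis j 1) - g (x + h *\<^sub>R axis i 1) + g x
      = h * h * spartial i (spartial j g) q"
    using second_difference_mvt[OF op dg dgi r(2) h(5) h(2)] by blast
  have eq: "x + h *\<^sub>R axis j 1 + h *\<^sub>R axis i 1 = x + h *\<^sub>R axis i 1 + h *\<^sub>R axis j (1::real)"
    by (simp add: algebra_simps)
  have "h * h * spartial j (spartial i g) p = h * h * spartial i (spartial j g) q"
    using p(2) q(2)[unfolded eq] by linarith
  hence pq: "spartial j (spartial i g) p = spartial i (spartial j g) q" using h by simp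
  have pO: "p \<in> \<Omega>" using p(1) h r by (auto simp: dist_commute intro!: subsetD[OF r(2)])
  have qO: "q \<in> \<Omega>" using q(1) h r by (auto simp: dist_commute intro!: subsetD[OF r(2)])
  have "dist (spartial j (spartial i g) p) ?a < e" using d1(2)[OF pO] p(1) h by simp
  moreover have "dist (spartial i (spartial j g) q) ?b < e" using d2(2)[OF qO] q(1) h by simp
  ultimately have "\<bar>?a - ?b\<bar> < 2 * e" using pq by (simp add: dist_real_def)
  thus False unfolding e_def by simp
qed

lemma spartial_commute_C2:
  fixes g :: "(real, 'n::{finite,linorder}) vec \<Rightarrow> real"
  assumes "open \<Omega>" and "x \<in> \<Omega>" and "Ck_on 2 g \<Omega>"
  shows "spartial i (spartial j g) x = spartial j (spartial i g) x"
  using assms(3) by (intro spartial_commute[OF assms(1,2)]) (auto simp: numeral_2_eq_2)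

lemma Ck_mono: "Ck_on (Suc n) g S \<Longrightarrow> Ck_on n g S"
  by (induction n arbitrary: g) (auto simp: differentiable_imp_continuous_on)

lemma Ck_mono_le: "m \<le> n \<Longrightarrow> Ck_on n g S \<Longrightarrow> Ck_on m g S"
  by (induction n rule: dec_induct) (blast dest: Ck_mono)+

lemma Ck_differentiable_at: "open S \<Longrightarrow> Ck_on (Suc n) g S \<Longrightarrow> x \<in> S \<Longrightarrow> g differentiable (at x)"
  using differentiable_on_eq_differentiable_at by auto

lemma differentiable_on_cong:
  assumes "open S" "\<And>y. y \<in> S \<Longrightarrow> f y = g y" "f differentiable_on S"
  shows "g differentiable_on S"
  unfolding differentiable_on_eq_differentiable_at[OF assms(1)]
proof
  fix x assume x: "x \<in> S"
  then obtain f' where "(f has_derivative f') (at x)"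
    using assms(1,3) differentiable_on_eq_differentiable_at differentiable_def by blast
  hence "(g has_derivative f') (at x)" by (rule has_derivative_transform_within_open[OF _ assms(1) x assms(2)])
  thus "g differentiable at x" by (auto simp: differentiable_def)
qed

lemma Ck_cong:
  assumes "open S" "\<And>y. y \<in> S \<Longrightarrow> f y = g y" "Ck_on n f S"
  shows "Ck_on n g S"
  using assms(2,3)
proof (induction n arbitrary: f g)
  case 0 thus ?case using continuous_on_cong[OF refl, of S f g] by auto
next
  case (Suc n)
  have "g differentiable_on S" using differentiable_on_cong[OF assms(1)] Suc.prems by auto
  moreover have "Ck_on n (spartial j g) S" for j
  proof -
    have "\<And>y. y \<in> S \<Longrightarrow> spartial j f y = spartial j g y"
      using spartial_local[OF assms(1)] Suc.prems(1) by blast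
    thus ?thesis using Suc.IH Suc.prems(2) by auto
  qed
  ultimately show ?case by simp
qed

lemma spartial_const_fun: "spartial j (\<lambda>y. c) = (\<lambda>y. 0)"
  by (rule ext, rule spartial_intro) simp

lemma Ck_const: "Ck_on n (\<lambda>y. c) S"
  by (induction n arbitrary: c) (auto simp: spartial_const_fun)

lemma Ck_coord: "Ck_on n (\<lambda>y. y $ i) S"
proof (cases n)
  case 0 thus ?thesis by (simp add: continuous_on_component continuous_on_id)
next
  case (Suc m)
  have "spartial j (\<lambda>y. y $ i) = (\<lambda>y. if i = j then 1 else 0)" for j by (rule ext) (simp add: spartial_coord)
  thus ?thesis using Suc by (simp add: Ck_const bounded_linear_imp_differentiable_on bounded_linear_vec_nth)
qed

lemma Ck_add: "open S \<Longrightarrow> Ck_on n g S \<Longrightarrow> Ck_on n h S \<Longrightarrow> Ck_on n (\<lambda>y. g y + h y) S"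
proof (induction n arbitrary: g h)
  case 0 thus ?case by (auto intro: continuous_on_add)
next
  case (Suc n)
  have "Ck_on n (spartial j (\<lambda>y. g y + h y)) S" for j
  proof (rule Ck_cong[OF Suc.prems(1)])
    show "Ck_on n (\<lambda>y. spartial j g y + spartial j h y) S" using Suc by auto
    show "\<And>y. y \<in> S \<Longrightarrow> spartial j g y + spartial j h y = spartial j (\<lambda>y. g y + h y) y"
      using Suc.prems by (intro spartial_add[symmetric] Ck_differentiable_at)
  qed
  thus ?case using Suc.prems by (auto intro: differentiable_on_add)
qed

lemma Ck_mult: "open S \<Longrightarrow> Ck_on n g S \<Longrightarrow> Ck_on n h S \<Longrightarrow> Ck_on n (\<lambda>y. g y * h y) S"
proof (induction n arbitrary: g h)
  case 0 thus ?case by (auto intro: continuous_on_mult)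
next
  case (Suc n)
  have "Ck_on n (spartial j (\<lambda>y. g y * h y)) S" for j
  proof (rule Ck_cong[OF Suc.prems(1)])
    show "Ck_on n (\<lambda>y. spartial j g y * h y + g y * spartial j h y) S"
      using Suc by (intro Ck_add Suc.IH) (auto intro: Ck_mono)
    show "\<And>y. y \<in> S \<Longrightarrow> spartial j g y * h y + g y * spartial j h y = spartial j (\<lambda>y. g y * h y) y"
      using Suc.prems by (intro spartial_mult[symmetric] Ck_differentiable_at)
  qed
  thus ?case using Suc.prems by (auto intro: differentiable_on_mult)
qed

lemma Ck_sum: "open S \<Longrightarrow> (\<And>i. i \<in> I \<Longrightarrow> Ck_on n (g i) S) \<Longrightarrow> Ck_on n (\<lambda>y. \<Sum>i\<in>I. g i y) S"
proof (induction I rule: infinite_finite_induct)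
  case (infinite A) thus ?case by (simp add: Ck_const)
next
  case empty thus ?case by (simp add: Ck_const)
next
  case (insert x F) thus ?case by (simp add: Ck_add)
qed



section \<open>Partial derivatives of Clifford-valued functions\<close>

definition cdiff :: "((real, 'n::{finite,linorder}) vec \<Rightarrow> 'n clif) \<Rightarrow> (real, 'n) vec \<Rightarrow> bool" where
  "cdiff f x \<longleftrightarrow> (\<forall>A. (\<lambda>y. f y A) differentiable (at x))"

lemma cdiff_const: "cdiff (\<lambda>y. a) x"
  by (simp add: cdiff_def)
lemma cdiff_add: "cdiff f x \<Longrightarrow> cdiff g x \<Longrightarrow> cdiff (\<lambda>y. f y + g y) x"
  unfolding cdiff_def by (simp add: plus_fun_apply)
lemma cdiff_scaleR: "cdiff f x \<Longrightarrow> cdiff (\<lambda>y. r *\<^sub>R f y) x"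
  unfolding cdiff_def by (simp add: scaleR_fun_apply)
lemma cdiff_sum: "(\<And>i. i \<in> I \<Longrightarrow> cdiff (f i) x) \<Longrightarrow> cdiff (\<lambda>y. \<Sum>i\<in>I. f i y) x"
  unfolding cdiff_def sum_fun_apply by (cases "finite I") (auto intro!: differentiable_sum)
lemma cdiff_mul: "cdiff f x \<Longrightarrow> cdiff g x \<Longrightarrow> cdiff (\<lambda>y. f y \<odot> g y) x"
  unfolding cdiff_def cmul_def by (auto intro!: differentiable_sum differentiable_mult)

lemma cpartial_intro:
  assumes "\<And>A. ((\<lambda>t. f (x + t *\<^sub>R axis j 1) A) has_real_derivative D A) (at 0)"
  shows "cpartial j f x = D"
  unfolding cpartial_def by (rule ext, rule spartial_intro, rule assms)

lemma cpartial_has_derivative: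
  "cdiff f x \<Longrightarrow> ((\<lambda>t. f (x + t *\<^sub>R axis j 1) A) has_real_derivative cpartial j f x A) (at 0)"
  unfolding cdiff_def cpartial_def by (rule spartial_has_derivative) auto

lemma cpartial_local:
  assumes "open \<Omega>" "x \<in> \<Omega>" "\<And>y. y \<in> \<Omega> \<Longrightarrow> f y = g y"
  shows "cpartial j f x = cpartial j g x"
  unfolding cpartial_def by (rule ext, rule spartial_local[OF assms(1,2)]) (simp add: assms(3))

lemma cpartial_add: "cdiff f x \<Longrightarrow> cdiff g x \<Longrightarrow> cpartial j (\<lambda>y. f y + g y) x = cpartial j f x + cpartial j g x"
  by (rule cpartial_intro) (simp add: plus_fun_apply, intro DERIV_add cpartial_has_derivative)

lemma cpartial_minus: "cdiff f x \<Longrightarrow> cpartial j (\<lambda>y. - f y) x = - cpartial j f x"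
  by (rule cpartial_intro) (simp add: uminus_apply, intro DERIV_minus cpartial_has_derivative)

lemma cpartial_scaleR: "cdiff f x \<Longrightarrow> cpartial j (\<lambda>y. r *\<^sub>R f y) x = r *\<^sub>R cpartial j f x"
  by (rule cpartial_intro) (simp add: scaleR_fun_apply, intro DERIV_cmult cpartial_has_derivative)

lemma cpartial_sum: "finite I \<Longrightarrow> (\<And>i. i \<in> I \<Longrightarrow> cdiff (f i) x) \<Longrightarrow>
  cpartial j (\<lambda>y. \<Sum>i\<in>I. f i y) x = (\<Sum>i\<in>I. cpartial j (f i) x)"
  by (rule cpartial_intro) (simp add: sum_fun_apply, intro DERIV_sum cpartial_has_derivative, auto)

lemma cpartial_const_fun: "cpartial j (\<lambda>y. a) = (\<lambda>x. 0)"
  by (rule ext, rule cpartial_intro) (simp add: zero_fun_apply)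

lemma cpartial_mul:
  assumes "cdiff f x" "cdiff g x"
  shows "cpartial j (\<lambda>y. f y \<odot> g y) x = cpartial j f x \<odot> g x + f x \<odot> cpartial j g x"
proof (rule cpartial_intro)
  fix C
  have "((\<lambda>t. \<Sum>A\<in>UNIV. f (x + t *\<^sub>R axis j 1) A * g (x + t *\<^sub>R axis j 1) (symd A C) * csign A (symd A C))
     has_real_derivative (\<Sum>A\<in>UNIV. (cpartial j f x A * g x (symd A C) + f x A * cpartial j g x (symd A C)) * csign A (symd A C))) (at 0)"
  proof (rule DERIV_sum)
    fix A :: "'a set"
    have "((\<lambda>t. f (x + t *\<^sub>R axis j 1) A * g (x + t *\<^sub>R axis j 1) (symd A C)) has_real_derivative
       f (x + 0 *\<^sub>R axis j 1) A * cpartial j g x (symd A C) + cpartial j f x A * g (x + 0 *\<^sub>R axis j 1) (symd A C)) (at 0)"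
      by (rule DERIV_mult'[OF cpartial_has_derivative[OF assms(1)] cpartial_has_derivative[OF assms(2)]])
    from DERIV_cmult_right[OF this, of "csign A (symd A C)"]
    show "((\<lambda>t. f (x + t *\<^sub>R axis j 1) A * g (x + t *\<^sub>R axis j 1) (symd A C) * csign A (symd A C))
     has_real_derivative (cpartial j f x A * g x (symd A C) + f x A * cpartial j g x (symd A C)) * csign A (symd A C)) (at 0)"
      by (simp add: algebra_simps)
  qed
  thus "((\<lambda>t. (f (x + t *\<^sub>R axis j 1) \<odot> g (x + t *\<^sub>R axis j 1)) C) has_real_derivative
          (cpartial j f x \<odot> g x + f x \<odot> cpartial j g x) C) (at 0)"
    by (simp add: cmul_def plus_fun_apply algebra_simps sum.distrib)
qed

lemma cpartial_lmul: "cdiff f y \<Longrightarrow> cpartial j (\<lambda>z. a \<odot> f z) y = a \<odot> cpartial j f y"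
  using cpartial_mul[OF cdiff_const, of f y j a] by (simp add: cpartial_const_fun)
lemma cpartial_rmul: "cdiff f y \<Longrightarrow> cpartial j (\<lambda>z. f z \<odot> a) y = cpartial j f y \<odot> a"
  using cpartial_mul[OF _ cdiff_const, of f y j a] by (simp add: cpartial_const_fun)

lemma cpartial_sandwich:
  assumes "cdiff f y"
  shows "cpartial j (\<lambda>z. sandwich (f z)) y = sandwich (cpartial j f y)"
proof -
  have e: "\<And>i. cpartial j (\<lambda>z. cbasis i \<odot> (f z \<odot> cbasis i)) y = cbasis i \<odot> (cpartial j f y \<odot> cbasis i)"
    using cpartial_lmul[OF cdiff_mul[OF assms cdiff_const]] cpartial_rmul[OF assms] by simp
  show ?thesis unfolding sandwich_def
    by (subst cpartial_sum) (auto intro!: cdiff_mul cdiff_const assms simp: e)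
qed

lemma cpartial_cvec: "cpartial j cvec x = cbasis j"
proof (rule cpartial_intro)
  fix A
  have "((\<lambda>t. \<Sum>i\<in>UNIV. (x + t *\<^sub>R axis j 1) $ i * cbasis i A) has_real_derivative
      (\<Sum>i\<in>UNIV. (if i = j then 1 else 0) * cbasis i A)) (at 0)"
    by (intro DERIV_sum DERIV_cmult_right) (auto intro!: derivative_eq_intros simp: axis_def)
  thus "((\<lambda>t. cvec (x + t *\<^sub>R axis j 1) A) has_real_derivative cbasis j A) (at 0)"
    by (simp add: cvec_def if_distrib[of "\<lambda>x. x * _"] cong: if_cong)
qed

definition infra_op :: "((real, 'n::{finite,linorder}) vec \<Rightarrow> 'n clif) \<Rightarrow> (real, 'n) vec \<Rightarrow> 'n clif" where
  "infra_op f = (\<lambda>x. \<Sum>i\<in>UNIV. \<Sum>j\<in>UNIV. cbasis i \<odot> cpartial i (cpartial j f) x \<odot> cbasis j)"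

lemma dirac_l_apply: "dirac_l f x = (\<Sum>j\<in>UNIV. cbasis j \<odot> cpartial j f x)"
  by (rule ext) (simp add: dirac_l_def sum_fun_apply)
lemma dirac_r_apply: "dirac_r f x = (\<Sum>j\<in>UNIV. cpartial j f x \<odot> cbasis j)"
  by (rule ext) (simp add: dirac_r_def sum_fun_apply)
lemma laplacian_apply: "laplacian f x = (\<Sum>j\<in>UNIV. cpartial j (cpartial j f) x)"
  by (rule ext) (simp add: laplacian_def sum_fun_apply)

lemma dirac_l_fun: "dirac_l f = (\<lambda>x. \<Sum>j\<in>UNIV. cbasis j \<odot> cpartial j f x)"
  by (rule ext, rule dirac_l_apply)
lemma dirac_r_fun: "dirac_r f = (\<lambda>x. \<Sum>j\<in>UNIV. cpartial j f x \<odot> cbasis j)"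
  by (rule ext, rule dirac_r_apply)
lemma laplacian_fun: "laplacian f = (\<lambda>x. \<Sum>j\<in>UNIV. cpartial j (cpartial j f) x)"
  by (rule ext, rule laplacian_apply)

lemma inframonogenic_on_iff: "inframonogenic_on f S \<longleftrightarrow> (\<forall>x\<in>S. infra_op f x = 0)"
  unfolding inframonogenic_on_def infra_op_def zero_clif_lambda[symmetric]
  by (simp add: sum_fun_apply fun_eq_iff)
lemma harmonic_on_iff: "harmonic_on f S \<longleftrightarrow> (\<forall>x\<in>S. laplacian f x = 0)"
  unfolding harmonic_on_def zero_clif_lambda ..
lemma biharmonic_on_iff: "biharmonic_on f S \<longleftrightarrow> (\<forall>x\<in>S. laplacian (laplacian f) x = 0)"
  unfolding biharmonic_on_def zero_clif_lambda ..
lemma left_3_monogenic_on_iff: "left_3_monogenic_on f S \<longleftrightarrow> (\<forall>x\<in>S. dirac_l (dirac_l (dirac_l f)) x = 0)"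
  unfolding left_3_monogenic_on_def zero_clif_lambda ..
lemma right_3_monogenic_on_iff: "right_3_monogenic_on f S \<longleftrightarrow> (\<forall>x\<in>S. dirac_r (dirac_r (dirac_r f)) x = 0)"
  unfolding right_3_monogenic_on_def zero_clif_lambda ..

lemma dirac_l_add: "cdiff f y \<Longrightarrow> cdiff g y \<Longrightarrow> dirac_l (\<lambda>z. f z + g z) y = dirac_l f y + dirac_l g y"
  by (simp add: dirac_l_apply cpartial_add cmul_add_right sum.distrib)
lemma dirac_l_scaleR: "cdiff f y \<Longrightarrow> dirac_l (\<lambda>z. r *\<^sub>R f z) y = r *\<^sub>R dirac_l f y"
  by (simp add: dirac_l_apply cpartial_scaleR cmul_scaleR_right scaleR_sum_right)
lemma dirac_l_minus: "cdiff f y \<Longrightarrow> dirac_l (\<lambda>z. - f z) y = - dirac_l f y"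
  by (simp add: dirac_l_apply cpartial_minus cmul_minus_right sum_negf)
lemma dirac_r_add: "cdiff f y \<Longrightarrow> cdiff g y \<Longrightarrow> dirac_r (\<lambda>z. f z + g z) y = dirac_r f y + dirac_r g y"
  by (simp add: dirac_r_apply cpartial_add cmul_add_left sum.distrib)
lemma dirac_r_scaleR: "cdiff f y \<Longrightarrow> dirac_r (\<lambda>z. r *\<^sub>R f z) y = r *\<^sub>R dirac_r f y"
  by (simp add: dirac_r_apply cpartial_scaleR cmul_scaleR_left scaleR_sum_right)
lemma dirac_r_minus: "cdiff f y \<Longrightarrow> dirac_r (\<lambda>z. - f z) y = - dirac_r f y"
  by (simp add: dirac_r_apply cpartial_minus cmul_minus_left sum_negf)

lemma dirac_l_sandwich:
  "cdiff f y \<Longrightarrow> dirac_l (\<lambda>z. sandwich (f z)) y = - sandwich (dirac_l f y) - 2 *\<^sub>R dirac_r f y"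
  by (simp add: dirac_l_apply dirac_r_apply cpartial_sandwich sum_cbasis_sandwich_left)
lemma dirac_r_sandwich:
  "cdiff f y \<Longrightarrow> dirac_r (\<lambda>z. sandwich (f z)) y = - sandwich (dirac_r f y) - 2 *\<^sub>R dirac_l f y"
  by (simp add: dirac_l_apply dirac_r_apply cpartial_sandwich sum_cbasis_sandwich_right)

section \<open>Differential identities on an open set\<close>

lemma sum_twice_plus_left:
  "(\<Sum>j\<in>I. a j + (a j + b j)) = (\<Sum>j\<in>I. b j) + 2 *\<^sub>R (\<Sum>j\<in>I. (a j :: 'a::real_vector))"
  by (simp add: sum.distrib scaleR_2 add_ac)
lemma sum_twice_plus_right:
  "(\<Sum>j\<in>I. (b j + a j) + a j) = (\<Sum>j\<in>I. b j) + 2 *\<^sub>R (\<Sum>j\<in>I. (a j :: 'a::real_vector))"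
  by (simp add: sum.distrib scaleR_2 add_ac)

locale open_domain =
  fixes \<Omega> :: "(real, 'n::{finite,linorder}) vec set"
  assumes op: "open \<Omega>"
begin

abbreviation cC :: "nat \<Rightarrow> ((real, 'n) vec \<Rightarrow> 'n clif) \<Rightarrow> bool" where
  "cC n f \<equiv> cCk_on n f \<Omega>"

lemma cC_mono_le: "cC n f \<Longrightarrow> m \<le> n \<Longrightarrow> cC m f"
  unfolding cCk_on_def using Ck_mono_le by blast

lemma cC_cdiff: "cC n f \<Longrightarrow> 1 \<le> n \<Longrightarrow> y \<in> \<Omega> \<Longrightarrow> cdiff f y"
  unfolding cCk_on_def cdiff_def
  using Ck_differentiable_at[OF op, of 0] Ck_mono_le[of 1 n] by (simp add: numeral_eq_Suc) blast

lemma cC_partial: "cC (Suc n) f \<Longrightarrow> cC n (cpartial j f)"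
  unfolding cCk_on_def cpartial_def by simp

lemma cC_partial_le: "cC n f \<Longrightarrow> 1 \<le> n \<Longrightarrow> cC (n - 1) (cpartial j f)"
  using cC_partial[of "n - 1" f j] by (cases n) auto

lemma cdiff_cpartial: "cC n f \<Longrightarrow> 2 \<le> n \<Longrightarrow> y \<in> \<Omega> \<Longrightarrow> cdiff (cpartial j f) y"
  using cC_cdiff[OF cC_partial_le[of n f j]] by simp

lemma cdiff_cpartial2: "cC n f \<Longrightarrow> 3 \<le> n \<Longrightarrow> y \<in> \<Omega> \<Longrightarrow> cdiff (cpartial i (cpartial j f)) y"
  using cdiff_cpartial[OF cC_partial_le[of n f j], where j=i and y=y] by simp

lemma cC_add: "cC n f \<Longrightarrow> cC n g \<Longrightarrow> cC n (\<lambda>y. f y + g y)"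
  unfolding cCk_on_def by (simp add: plus_fun_apply Ck_add[OF op])

lemma cC_scaleR: "cC n f \<Longrightarrow> cC n (\<lambda>y. r *\<^sub>R f y)"
  unfolding cCk_on_def by (simp add: scaleR_fun_apply Ck_mult[OF op Ck_const])

lemma cC_sum: "(\<And>i. i \<in> I \<Longrightarrow> cC n (f i)) \<Longrightarrow> cC n (\<lambda>y. \<Sum>i\<in>I. f i y)"
  unfolding cCk_on_def by (simp add: sum_fun_apply Ck_sum[OF op])

lemma cC_const: "cC n (\<lambda>y. a)"
  unfolding cCk_on_def by (simp add: Ck_const)

lemma cC_mul: "cC n f \<Longrightarrow> cC n g \<Longrightarrow> cC n (\<lambda>y. f y \<odot> g y)"
  unfolding cCk_on_def cmul_def
  by (auto intro!: Ck_sum[OF op] Ck_mult[OF op] Ck_const)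

lemma cC_cvec: "cC n cvec"
  unfolding cCk_on_def cvec_def
  by (auto intro!: Ck_sum[OF op] Ck_mult[OF op] Ck_const Ck_coord)

lemma cdiff_cvec: "y \<in> \<Omega> \<Longrightarrow> cdiff cvec y"
  by (rule cC_cdiff[OF cC_cvec[of 1]]) simp

lemma cC_dirac_l: "cC (Suc n) f \<Longrightarrow> cC n (dirac_l f)"
  unfolding dirac_l_fun by (intro cC_sum cC_mul cC_const cC_partial)
lemma cC_dirac_r: "cC (Suc n) f \<Longrightarrow> cC n (dirac_r f)"
  unfolding dirac_r_fun by (intro cC_sum cC_mul cC_const cC_partial)
lemma cC_laplacian: "cC (Suc (Suc n)) f \<Longrightarrow> cC n (laplacian f)"
  unfolding laplacian_fun by (intro cC_sum cC_partial)

lemma cC_dirac_l_le: "cC n f \<Longrightarrow> 1 \<le> n \<Longrightarrow> cC (n - 1) (dirac_l f)"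
  using cC_dirac_l[of "n - 1" f] by (cases n) auto
lemma cC_dirac_r_le: "cC n f \<Longrightarrow> 1 \<le> n \<Longrightarrow> cC (n - 1) (dirac_r f)"
  using cC_dirac_r[of "n - 1" f] by (cases n) auto
lemma cC_laplacian_le: "cC n f \<Longrightarrow> 2 \<le> n \<Longrightarrow> cC (n - 2) (laplacian f)"
  using cC_laplacian[of "n - 2" f] by (cases n; cases "n - 1") auto

lemma cpartial_loc: "x \<in> \<Omega> \<Longrightarrow> (\<And>y. y \<in> \<Omega> \<Longrightarrow> f y = g y) \<Longrightarrow> cpartial j f x = cpartial j g x"
  by (rule cpartial_local[OF op])

lemma cpartial2_loc: "x \<in> \<Omega> \<Longrightarrow> (\<And>y. y \<in> \<Omega> \<Longrightarrow> f y = g y) \<Longrightarrow> cpartial i (cpartial j f) x = cpartial i (cpartial j g) x"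
  by (rule cpartial_loc, assumption, rule cpartial_loc)

lemma dirac_l_loc: "x \<in> \<Omega> \<Longrightarrow> (\<And>y. y \<in> \<Omega> \<Longrightarrow> f y = g y) \<Longrightarrow> dirac_l f x = dirac_l g x"
  unfolding dirac_l_apply using cpartial_loc by metis
lemma dirac_r_loc: "x \<in> \<Omega> \<Longrightarrow> (\<And>y. y \<in> \<Omega> \<Longrightarrow> f y = g y) \<Longrightarrow> dirac_r f x = dirac_r g x"
  unfolding dirac_r_apply using cpartial_loc by metis
lemma laplacian_loc: "x \<in> \<Omega> \<Longrightarrow> (\<And>y. y \<in> \<Omega> \<Longrightarrow> f y = g y) \<Longrightarrow> laplacian f x = laplacian g x"
  unfolding laplacian_apply using cpartial2_loc by metis

lemma dirac_l_vanish: "(\<And>z. z \<in> \<Omega> \<Longrightarrow> f z = 0) \<Longrightarrow> x \<in> \<Omega> \<Longrightarrow> dirac_l f x = 0"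
  using dirac_l_loc[of x f "\<lambda>z. 0"] by (simp add: dirac_l_apply cpartial_const_fun)
lemma dirac_r_vanish: "(\<And>z. z \<in> \<Omega> \<Longrightarrow> f z = 0) \<Longrightarrow> x \<in> \<Omega> \<Longrightarrow> dirac_r f x = 0"
  using dirac_r_loc[of x f "\<lambda>z. 0"] by (simp add: dirac_r_apply cpartial_const_fun)
lemma laplacian_vanish: "(\<And>z. z \<in> \<Omega> \<Longrightarrow> f z = 0) \<Longrightarrow> x \<in> \<Omega> \<Longrightarrow> laplacian f x = 0"
  using laplacian_loc[of x f "\<lambda>z. 0"] by (simp add: laplacian_apply cpartial_const_fun)

lemma cpartial_mul_cvec: "cdiff f y \<Longrightarrow> y \<in> \<Omega> \<Longrightarrow> cpartial j (\<lambda>z. f z \<odot> cvec z) y = cpartial j f y \<odot> cvec y + f y \<odot> cbasis j"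
  using cpartial_mul[OF _ cdiff_cvec, of f y j] by (simp add: cpartial_cvec)
lemma cpartial_cvec_mul: "cdiff f y \<Longrightarrow> y \<in> \<Omega> \<Longrightarrow> cpartial j (\<lambda>z. cvec z \<odot> f z) y = cbasis j \<odot> f y + cvec y \<odot> cpartial j f y"
  using cpartial_mul[OF cdiff_cvec, of y f j] by (simp add: cpartial_cvec)

lemma dirac_l_mul_cvec: "cdiff f y \<Longrightarrow> y \<in> \<Omega> \<Longrightarrow> dirac_l (\<lambda>z. f z \<odot> cvec z) y = dirac_l f y \<odot> cvec y + sandwich (f y)"
  by (simp add: dirac_l_apply cpartial_mul_cvec cmul_add_right sum.distrib sandwich_def cmul_sum_left cmul_assoc)
lemma dirac_r_cvec_mul: "cdiff f y \<Longrightarrow> y \<in> \<Omega> \<Longrightarrow> dirac_r (\<lambda>z. cvec z \<odot> f z) y = cvec y \<odot> dirac_r f y + sandwich (f y)"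
  by (simp add: dirac_r_apply cpartial_cvec_mul cmul_add_left sum.distrib sandwich_def cmul_sum_right cmul_assoc add.commute)

lemma cpartial_commute: "cC 2 f \<Longrightarrow> y \<in> \<Omega> \<Longrightarrow> cpartial i (cpartial j f) y = cpartial j (cpartial i f) y"
  unfolding cpartial_def cCk_on_def
  by (rule ext) (simp add: spartial_commute_C2[OF op])

lemma cpartial3_swap12: "cC 3 f \<Longrightarrow> y \<in> \<Omega> \<Longrightarrow> cpartial a (cpartial b (cpartial c f)) y = cpartial b (cpartial a (cpartial c f)) y"
  by (rule cpartial_commute) (auto intro: cC_partial simp: numeral_3_eq_3 numeral_2_eq_2)

lemma cpartial3_swap23: "cC 3 f \<Longrightarrow> y \<in> \<Omega> \<Longrightarrow> cpartial a (cpartial b (cpartial c f)) y = cpartial a (cpartial c (cpartial b f)) y"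
  by (rule cpartial_loc, assumption, rule cpartial_commute) (auto elim: cC_mono_le)

lemma kvector_cpartial:
  assumes "\<And>z. z \<in> \<Omega> \<Longrightarrow> is_kvector k (f z)" "y \<in> \<Omega>"
  shows "is_kvector k (cpartial j f y)"
  unfolding is_kvector_def
proof (intro allI impI)
  fix A :: "'n set" assume A: "card A \<noteq> k"
  have "cpartial j f y A = spartial j (\<lambda>z. f z A) y" by (simp add: cpartial_def)
  also have "\<dots> = spartial j (\<lambda>z. 0) y"
    using assms A by (intro spartial_local[OF op]) (auto simp: is_kvector_def)
  finally show "cpartial j f y A = 0" by (simp add: spartial_const_fun)
qed

lemma kvector_sum: "(\<And>i. i \<in> I \<Longrightarrow> is_kvector k (f i)) \<Longrightarrow> is_kvector k (\<Sum>i\<in>I. f i)"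
  by (simp add: is_kvector_def sum_fun_apply)

lemma kvector_laplacian:
  assumes "\<And>z. z \<in> \<Omega> \<Longrightarrow> is_kvector k (f z)" "y \<in> \<Omega>"
  shows "is_kvector k (laplacian f y)"
  unfolding laplacian_apply
  by (intro kvector_sum kvector_cpartial[OF _ assms(2)] kvector_cpartial[OF assms(1)])

lemma cpartial_dirac_l:
  assumes "cC 2 f" "y \<in> \<Omega>"
  shows "cpartial j (dirac_l f) y = (\<Sum>k\<in>UNIV. cbasis k \<odot> cpartial j (cpartial k f) y)"
proof -
  have d: "cdiff (cpartial k f) y" for k
    using cdiff_cpartial[OF assms(1) _ assms(2)] by simp
  show ?thesis unfolding dirac_l_fun
    by (subst cpartial_sum) (auto intro!: cdiff_mul cdiff_const d simp: cpartial_lmul d)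
qed

lemma cpartial_dirac_r:
  assumes "cC 2 f" "y \<in> \<Omega>"
  shows "cpartial j (dirac_r f) y = (\<Sum>k\<in>UNIV. cpartial j (cpartial k f) y \<odot> cbasis k)"
proof -
  have d: "cdiff (cpartial k f) y" for k
    using cdiff_cpartial[OF assms(1) _ assms(2)] by simp
  show ?thesis unfolding dirac_r_fun
    by (subst cpartial_sum) (auto intro!: cdiff_mul cdiff_const d simp: cpartial_rmul d)
qed

lemma cpartial_laplacian:
  assumes "cC 3 f" "y \<in> \<Omega>"
  shows "cpartial j (laplacian f) y = (\<Sum>k\<in>UNIV. cpartial j (cpartial k (cpartial k f)) y)"
proof -
  have d: "cdiff (cpartial k (cpartial k f)) y" for k
    using cdiff_cpartial2[OF assms(1) _ assms(2)] by simp
  show ?thesis unfolding laplacian_fun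
    by (subst cpartial_sum) (auto intro!: d)
qed

lemma cpartial_infra_op:
  assumes "cC 3 f" "y \<in> \<Omega>"
  shows "cpartial l (infra_op f) y = (\<Sum>i\<in>UNIV. \<Sum>j\<in>UNIV. cbasis i \<odot> cpartial l (cpartial i (cpartial j f)) y \<odot> cbasis j)"
proof -
  have d: "cdiff (cpartial i (cpartial j f)) y" for i j
    using cdiff_cpartial2[OF assms(1) _ assms(2)] by simp
  have e: "cpartial l (\<lambda>z. cbasis i \<odot> cpartial i (cpartial j f) z \<odot> cbasis j) y =
     cbasis i \<odot> cpartial l (cpartial i (cpartial j f)) y \<odot> cbasis j" for i j
    using cpartial_rmul[OF cdiff_mul[OF cdiff_const d]] cpartial_lmul[OF d] by simp
  have e2: "cpartial l (\<lambda>z. \<Sum>j\<in>UNIV. cbasis i \<odot> cpartial i (cpartial j f) z \<odot> cbasis j) y =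
     (\<Sum>j\<in>UNIV. cbasis i \<odot> cpartial l (cpartial i (cpartial j f)) y \<odot> cbasis j)" for i
    by (subst cpartial_sum) (auto intro!: cdiff_mul cdiff_const d simp: e)
  show ?thesis unfolding infra_op_def
    by (subst cpartial_sum) (auto intro!: cdiff_sum cdiff_mul cdiff_const d simp: e2)
qed

(* By Schwarz's theorem, \<partial>\<partial>f = f\<partial>\<partial> = -\<Delta>f, while (\<partial>f)\<partial> = \<partial>(f\<partial>) is the
   inframonogenic operator. *)

lemma dirac_l_dirac_l:
  assumes "cC 2 f" "y \<in> \<Omega>"
  shows "dirac_l (dirac_l f) y = - laplacian f y"
proof -
  have "dirac_l (dirac_l f) y = (\<Sum>j\<in>UNIV. \<Sum>k\<in>UNIV. cbasis j \<odot> (cbasis k \<odot> cpartial j (cpartial k f) y))"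
    by (simp add: dirac_l_apply[of "dirac_l f"] cpartial_dirac_l[OF assms] cmul_sum_right)
  also have "\<dots> = - (\<Sum>j\<in>UNIV. cpartial j (cpartial j f) y)"
    by (rule sum_cbasis_pairs_left) (rule cpartial_commute[OF assms])
  finally show ?thesis by (simp add: laplacian_apply)
qed

lemma dirac_r_dirac_r:
  assumes "cC 2 f" "y \<in> \<Omega>"
  shows "dirac_r (dirac_r f) y = - laplacian f y"
proof -
  have "dirac_r (dirac_r f) y = (\<Sum>j\<in>UNIV. \<Sum>k\<in>UNIV. (cpartial j (cpartial k f) y \<odot> cbasis k) \<odot> cbasis j)"
    by (simp add: dirac_r_apply[of "dirac_r f"] cpartial_dirac_r[OF assms] cmul_sum_left)
  also have "\<dots> = (\<Sum>k\<in>UNIV. \<Sum>j\<in>UNIV. (cpartial j (cpartial k f) y \<odot> cbasis k) \<odot> cbasis j)"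
    by (rule sum.swap)
  also have "\<dots> = - (\<Sum>k\<in>UNIV. cpartial k (cpartial k f) y)"
    by (rule sum_cbasis_pairs_right) (rule cpartial_commute[OF assms])
  finally show ?thesis by (simp add: laplacian_apply)
qed

lemma dirac_r_dirac_l:
  assumes "cC 2 f" "y \<in> \<Omega>"
  shows "dirac_r (dirac_l f) y = infra_op f y"
proof -
  have "dirac_r (dirac_l f) y = (\<Sum>j\<in>UNIV. \<Sum>k\<in>UNIV. cbasis k \<odot> cpartial j (cpartial k f) y \<odot> cbasis j)"
    by (simp add: dirac_r_apply[of "dirac_l f"] cpartial_dirac_l[OF assms] cmul_sum_left)
  also have "\<dots> = (\<Sum>k\<in>UNIV. \<Sum>j\<in>UNIV. cbasis k \<odot> cpartial j (cpartial k f) y \<odot> cbasis j)"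
    by (rule sum.swap)
  also have "\<dots> = infra_op f y"
    unfolding infra_op_def using cpartial_commute[OF assms] by simp
  finally show ?thesis .
qed

lemma dirac_l_dirac_r:
  assumes "cC 2 f" "y \<in> \<Omega>"
  shows "dirac_l (dirac_r f) y = infra_op f y"
  by (simp add: dirac_l_apply[of "dirac_r f"] cpartial_dirac_r[OF assms] cmul_sum_right infra_op_def cmul_assoc)

lemma laplacian_add:
  assumes "cC 2 f" "cC 2 g" "y \<in> \<Omega>"
  shows "laplacian (\<lambda>z. f z + g z) y = laplacian f y + laplacian g y"
proof -
  have d: "cdiff f z" "cdiff g z" if "z \<in> \<Omega>" for z
    using assms that by (auto intro: cC_cdiff)
  have d2: "cdiff (cpartial j f) y" "cdiff (cpartial j g) y" for j
    using assms by (auto intro!: cdiff_cpartial)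
  have "cpartial j (cpartial j (\<lambda>z. f z + g z)) y = cpartial j (\<lambda>z. cpartial j f z + cpartial j g z) y" for j
    using assms(3) by (rule cpartial_loc) (simp add: cpartial_add d)
  thus ?thesis by (simp add: laplacian_apply cpartial_add d2 sum.distrib)
qed

lemma laplacian_scaleR:
  assumes "cC 2 f" "y \<in> \<Omega>"
  shows "laplacian (\<lambda>z. r *\<^sub>R f z) y = r *\<^sub>R laplacian f y"
proof -
  have d: "cdiff f z" if "z \<in> \<Omega>" for z
    using assms that by (auto intro: cC_cdiff)
  have d2: "cdiff (cpartial j f) y" for j
    using assms by (auto intro!: cdiff_cpartial)
  have "cpartial j (cpartial j (\<lambda>z. r *\<^sub>R f z)) y = cpartial j (\<lambda>z. r *\<^sub>R cpartial j f z) y" for j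
    using assms(2) by (rule cpartial_loc) (simp add: cpartial_scaleR d)
  thus ?thesis by (simp add: laplacian_apply cpartial_scaleR d2 scaleR_sum_right)
qed

lemma laplacian_add_scaleR:
  assumes "cC 2 f" "cC 2 g" "y \<in> \<Omega>"
  shows "laplacian (\<lambda>z. f z + r *\<^sub>R g z) y = laplacian f y + r *\<^sub>R laplacian g y"
  using laplacian_add[OF assms(1) cC_scaleR[OF assms(2)] assms(3)] laplacian_scaleR[OF assms(2,3)] by simp

lemma laplacian_cvec_mul:
  assumes "cC 2 f" "y \<in> \<Omega>"
  shows "laplacian (\<lambda>z. cvec z \<odot> f z) y = cvec y \<odot> laplacian f y + 2 *\<^sub>R dirac_l f y"
proof -
  have d: "cdiff f z" if "z \<in> \<Omega>" for z
    using assms that by (auto intro: cC_cdiff)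
  have d2: "cdiff (cpartial j f) y" for j
    using assms by (auto intro!: cdiff_cpartial)
  have "cpartial j (cpartial j (\<lambda>z. cvec z \<odot> f z)) y = cpartial j (\<lambda>z. cbasis j \<odot> f z + cvec z \<odot> cpartial j f z) y" for j
    using assms(2) by (rule cpartial_loc) (simp add: cpartial_cvec_mul d)
  also have "\<dots> j = cbasis j \<odot> cpartial j f y + (cbasis j \<odot> cpartial j f y + cvec y \<odot> cpartial j (cpartial j f) y)" for j
    using assms(2) by (simp add: cpartial_add cdiff_mul cdiff_const cdiff_cvec d d2 cpartial_lmul cpartial_cvec_mul)
  finally have eqj: "cpartial j (cpartial j (\<lambda>z. cvec z \<odot> f z)) y = cbasis j \<odot> cpartial j f y + (cbasis j \<odot> cpartial j f y + cvec y \<odot> cpartial j (cpartial j f) y)" for j .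
  show ?thesis
    unfolding laplacian_apply dirac_l_apply eqj sum_twice_plus_left cmul_sum_right[symmetric] ..
qed

lemma laplacian_mul_cvec:
  assumes "cC 2 f" "y \<in> \<Omega>"
  shows "laplacian (\<lambda>z. f z \<odot> cvec z) y = laplacian f y \<odot> cvec y + 2 *\<^sub>R dirac_r f y"
proof -
  have d: "cdiff f z" if "z \<in> \<Omega>" for z
    using assms that by (auto intro: cC_cdiff)
  have d2: "cdiff (cpartial j f) y" for j
    using assms by (auto intro!: cdiff_cpartial)
  have "cpartial j (cpartial j (\<lambda>z. f z \<odot> cvec z)) y = cpartial j (\<lambda>z. cpartial j f z \<odot> cvec z + f z \<odot> cbasis j) y" for j
    using assms(2) by (rule cpartial_loc) (simp add: cpartial_mul_cvec d)
  also have "\<dots> j = (cpartial j (cpartial j f) y \<odot> cvec y + cpartial j f y \<odot> cbasis j) + cpartial j f y \<odot> cbasis j" for j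
    using assms(2) by (simp add: cpartial_add cdiff_mul cdiff_const cdiff_cvec d d2 cpartial_rmul cpartial_mul_cvec)
  finally have eqj: "cpartial j (cpartial j (\<lambda>z. f z \<odot> cvec z)) y = (cpartial j (cpartial j f) y \<odot> cvec y + cpartial j f y \<odot> cbasis j) + cpartial j f y \<odot> cbasis j" for j .
  show ?thesis
    unfolding laplacian_apply dirac_r_apply eqj sum_twice_plus_right cmul_sum_left[symmetric] ..
qed


lemma cpartial3_move_outer: "cC 3 f \<Longrightarrow> y \<in> \<Omega> \<Longrightarrow> cpartial l (cpartial l (cpartial k f)) y = cpartial k (cpartial l (cpartial l f)) y"
  using cpartial3_swap12[of f y l k l] cpartial3_swap23[of f y l l k] by simp

lemma laplacian_dirac_l:
  assumes "cC 3 f" "y \<in> \<Omega>"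
  shows "laplacian (dirac_l f) y = dirac_l (laplacian f) y"
proof -
  have f2: "cC 2 f" using assms(1) by (rule cC_mono_le) simp
  have "cpartial l (cpartial l (dirac_l f)) y = cpartial l (\<lambda>z. \<Sum>k\<in>UNIV. cbasis k \<odot> cpartial l (cpartial k f) z) y" for l
    using assms(2) by (rule cpartial_loc) (rule cpartial_dirac_l[OF f2])
  also have "\<dots> l = (\<Sum>k\<in>UNIV. cbasis k \<odot> cpartial l (cpartial l (cpartial k f)) y)" for l
    by (subst cpartial_sum) (auto intro!: cdiff_mul cdiff_const cdiff_cpartial2[OF assms(1)] assms(2) simp: cpartial_lmul cdiff_cpartial2[OF assms(1) _ assms(2)])
  finally have e: "cpartial l (cpartial l (dirac_l f)) y = (\<Sum>k\<in>UNIV. cbasis k \<odot> cpartial k (cpartial l (cpartial l f)) y)" for l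
    by (simp add: cpartial3_move_outer[OF assms])
  show ?thesis
    by (simp add: laplacian_apply e dirac_l_apply[of "laplacian f"] cpartial_laplacian[OF assms] cmul_sum_right) (rule sum.swap)
qed

lemma laplacian_dirac_r:
  assumes "cC 3 f" "y \<in> \<Omega>"
  shows "laplacian (dirac_r f) y = dirac_r (laplacian f) y"
proof -
  have f2: "cC 2 f" using assms(1) by (rule cC_mono_le) simp
  have "cpartial l (cpartial l (dirac_r f)) y = cpartial l (\<lambda>z. \<Sum>k\<in>UNIV. cpartial l (cpartial k f) z \<odot> cbasis k) y" for l
    using assms(2) by (rule cpartial_loc) (rule cpartial_dirac_r[OF f2])
  also have "\<dots> l = (\<Sum>k\<in>UNIV. cpartial l (cpartial l (cpartial k f)) y \<odot> cbasis k)" for l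
    by (subst cpartial_sum) (auto intro!: cdiff_mul cdiff_const cdiff_cpartial2[OF assms(1)] assms(2) simp: cpartial_rmul cdiff_cpartial2[OF assms(1) _ assms(2)])
  finally have e: "cpartial l (cpartial l (dirac_r f)) y = (\<Sum>k\<in>UNIV. cpartial k (cpartial l (cpartial l f)) y \<odot> cbasis k)" for l
    by (simp add: cpartial3_move_outer[OF assms])
  show ?thesis
    by (simp add: laplacian_apply e dirac_r_apply[of "laplacian f"] cpartial_laplacian[OF assms] cmul_sum_left) (rule sum.swap)
qed

lemma dirac_r_infra_op:
  assumes "cC 3 f" "y \<in> \<Omega>"
  shows "dirac_r (infra_op f) y = - dirac_l (laplacian f) y"
proof -
  let ?X = "\<lambda>l i j. cpartial l (cpartial i (cpartial j f)) y"
  have "dirac_r (infra_op f) y = (\<Sum>l\<in>UNIV. \<Sum>i\<in>UNIV. \<Sum>j\<in>UNIV. cbasis i \<odot> ((?X l i j \<odot> cbasis j) \<odot> cbasis l))"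
    by (simp add: dirac_r_apply cpartial_infra_op[OF assms] cmul_sum_left cmul_assoc)
  also have "\<dots> = (\<Sum>i\<in>UNIV. \<Sum>l\<in>UNIV. \<Sum>j\<in>UNIV. cbasis i \<odot> ((?X l i j \<odot> cbasis j) \<odot> cbasis l))"
    by (rule sum.swap)
  also have "\<dots> = (\<Sum>i\<in>UNIV. cbasis i \<odot> (\<Sum>j\<in>UNIV. \<Sum>l\<in>UNIV. (?X l i j \<odot> cbasis j) \<odot> cbasis l))"
    by (simp add: cmul_sum_right) (subst sum.swap, rule refl)
  also have "\<dots> = (\<Sum>i\<in>UNIV. cbasis i \<odot> (- (\<Sum>j\<in>UNIV. ?X j i j)))"
  proof (intro sum.cong refl arg_cong[where f="\<lambda>t. cbasis _ \<odot> t"])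
    fix i
    show "(\<Sum>j\<in>UNIV. \<Sum>l\<in>UNIV. (?X l i j \<odot> cbasis j) \<odot> cbasis l) = - (\<Sum>j\<in>UNIV. ?X j i j)"
    proof (rule sum_cbasis_pairs_right)
      fix j l
      show "?X l i j = ?X j i l"
        using cpartial3_swap23[OF assms, of l i j] cpartial3_swap12[OF assms, of l j i] cpartial3_swap23[OF assms, of j l i] by simp
    qed
  qed
  also have "\<dots> = - (\<Sum>i\<in>UNIV. cbasis i \<odot> cpartial i (laplacian f) y)"
    by (simp add: cpartial_laplacian[OF assms] cmul_minus_right sum_negf cpartial3_swap12[OF assms, of _ i _ for i])
  finally show ?thesis by (simp add: dirac_l_apply)
qed

lemma dirac_l_infra_op:
  assumes "cC 3 f" "y \<in> \<Omega>"
  shows "dirac_l (infra_op f) y = - dirac_r (laplacian f) y"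
proof -
  let ?X = "\<lambda>l i j. cpartial l (cpartial i (cpartial j f)) y"
  have "dirac_l (infra_op f) y = (\<Sum>l\<in>UNIV. \<Sum>i\<in>UNIV. \<Sum>j\<in>UNIV. (cbasis l \<odot> (cbasis i \<odot> ?X l i j)) \<odot> cbasis j)"
    by (simp add: dirac_l_apply cpartial_infra_op[OF assms] cmul_sum_right cmul_assoc)
  also have "\<dots> = (\<Sum>j\<in>UNIV. (\<Sum>l\<in>UNIV. \<Sum>i\<in>UNIV. cbasis l \<odot> (cbasis i \<odot> ?X l i j)) \<odot> cbasis j)"
    by (simp add: cmul_sum_left) (subst (2) sum.swap, subst sum.swap, rule refl)
  also have "\<dots> = (\<Sum>j\<in>UNIV. (- (\<Sum>l\<in>UNIV. ?X l l j)) \<odot> cbasis j)"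
  proof (intro sum.cong refl arg_cong[where f="\<lambda>t. t \<odot> cbasis _"])
    fix j
    show "(\<Sum>l\<in>UNIV. \<Sum>i\<in>UNIV. cbasis l \<odot> (cbasis i \<odot> ?X l i j)) = - (\<Sum>l\<in>UNIV. ?X l l j)"
      by (rule sum_cbasis_pairs_left) (rule cpartial3_swap12[OF assms])
  qed
  also have "\<dots> = - (\<Sum>j\<in>UNIV. cpartial j (laplacian f) y \<odot> cbasis j)"
    by (simp add: cpartial_laplacian[OF assms] cmul_minus_left sum_negf cpartial3_move_outer[OF assms])
  finally show ?thesis by (simp add: dirac_r_apply)
qed


end

section \<open>The three formulas\<close>

lemma regroup_bilaplacian:
  fixes a b c d e :: "'a::real_vector"
  shows "((a + 2 *\<^sub>R b + 2 *\<^sub>R c + (2 * r) *\<^sub>R d) + 2 *\<^sub>R (b + 2 *\<^sub>R e)) + 2 *\<^sub>R (c + 2 *\<^sub>R e) + (2 * r) *\<^sub>R d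
    = a + 4 *\<^sub>R b + 4 *\<^sub>R c + 8 *\<^sub>R e + (4 * r) *\<^sub>R d"
proof -
  have "(2::real) *\<^sub>R x + 2 *\<^sub>R x = 4 *\<^sub>R x" "(4::real) *\<^sub>R x + 4 *\<^sub>R x = 8 *\<^sub>R x"
       "(2 * r) *\<^sub>R x + (2 * r) *\<^sub>R x = (4 * r) *\<^sub>R x" for x :: 'a
    by (simp_all add: scaleR_left_distrib[symmetric])
  thus ?thesis by (simp add: algebra_simps)
qed

context open_domain
begin

lemma dirac_l_kvector_mul_cvec:
  assumes "cC 1 F" "\<And>z. z \<in> \<Omega> \<Longrightarrow> is_kvector k (F z)" "y \<in> \<Omega>"
  shows "dirac_l (\<lambda>z. F z \<odot> cvec z) y = dirac_l F y \<odot> cvec y + csig CARD('n) k *\<^sub>R F y"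
  using dirac_l_mul_cvec[OF cC_cdiff[OF assms(1)] assms(3)] sandwich_kvector[OF assms(2)[OF assms(3)]]
  by (simp add: assms(3))

lemma dirac_l2_kvector_mul_cvec:
  assumes F2: "cC 2 F" and kv: "\<And>z. z \<in> \<Omega> \<Longrightarrow> is_kvector k (F z)" and y: "y \<in> \<Omega>"
  shows "dirac_l (dirac_l (\<lambda>z. F z \<odot> cvec z)) y =
    (dirac_l (dirac_l F) y \<odot> cvec y + sandwich (dirac_l F y)) + csig CARD('n) k *\<^sub>R dirac_l F y"
proof -
  let ?c = "csig CARD('n) k"
  have dF: "cdiff F y" using cC_cdiff[OF F2 _ y] by simp
  have dDF: "cdiff (dirac_l F) y" using cC_cdiff[OF cC_dirac_l_le[OF F2] _ y] by simp
  have "dirac_l (dirac_l (\<lambda>z. F z \<odot> cvec z)) y = dirac_l (\<lambda>w. dirac_l F w \<odot> cvec w + ?c *\<^sub>R F w) y"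
    using y by (rule dirac_l_loc) (rule dirac_l_kvector_mul_cvec[OF cC_mono_le[OF F2] kv]; simp)
  also have "\<dots> = dirac_l (\<lambda>w. dirac_l F w \<odot> cvec w) y + dirac_l (\<lambda>w. ?c *\<^sub>R F w) y"
    by (rule dirac_l_add) (auto intro!: cdiff_mul cdiff_scaleR dDF dF cdiff_cvec y)
  also have "\<dots> = (dirac_l (dirac_l F) y \<odot> cvec y + sandwich (dirac_l F y)) + ?c *\<^sub>R dirac_l F y"
    by (simp add: dirac_l_mul_cvec[OF dDF y] dirac_l_scaleR[OF dF])
  finally show ?thesis .
qed

lemma dirac_l3_eq_dirac_l_laplacian:
  assumes "cC 3 F" "y \<in> \<Omega>"
  shows "dirac_l (dirac_l (dirac_l F)) y = - dirac_l (laplacian F) y"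
proof -
  have "dirac_l (dirac_l (dirac_l F)) y = dirac_l (\<lambda>z. - laplacian F z) y"
    using assms(2) by (rule dirac_l_loc) (rule dirac_l_dirac_l[OF cC_mono_le[OF assms(1)]]; simp)
  also have "\<dots> = - dirac_l (laplacian F) y"
    using cC_cdiff[OF cC_laplacian_le[OF assms(1)] _ assms(2)] by (simp add: dirac_l_minus)
  finally show ?thesis .
qed

lemma left_dirac3_F_x:
  assumes F3: "cC 3 F" and kv: "\<And>z. z \<in> \<Omega> \<Longrightarrow> is_kvector k (F z)" and y: "y \<in> \<Omega>"
  shows "dirac_l (dirac_l (dirac_l (\<lambda>z. F z \<odot> cvec z))) y =
    - (dirac_l (laplacian F) y \<odot> cvec y) - 2 *\<^sub>R infra_op F y - csig CARD('n) k *\<^sub>R laplacian F y"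
proof -
  let ?c = "csig CARD('n) k"
  have F2: "cC 2 F" using F3 by (rule cC_mono_le) simp
  have dDF: "cdiff (dirac_l F) y" using cC_cdiff[OF cC_dirac_l_le[OF F3] _ y] by simp
  have dDDF: "cdiff (dirac_l (dirac_l F)) y"
    using cC_cdiff[OF cC_dirac_l_le[OF cC_dirac_l_le[OF F3]] _ y] by simp
  have "dirac_l (dirac_l (dirac_l (\<lambda>z. F z \<odot> cvec z))) y =
     dirac_l (\<lambda>z. (dirac_l (dirac_l F) z \<odot> cvec z + sandwich (dirac_l F z)) + ?c *\<^sub>R dirac_l F z) y"
    using y by (rule dirac_l_loc) (rule dirac_l2_kvector_mul_cvec[OF F2 kv])
  also have "\<dots> = (dirac_l (\<lambda>z. dirac_l (dirac_l F) z \<odot> cvec z) y + dirac_l (\<lambda>z. sandwich (dirac_l F z)) y)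
       + dirac_l (\<lambda>z. ?c *\<^sub>R dirac_l F z) y"
    by (subst dirac_l_add, auto intro!: cdiff_add cdiff_mul cdiff_scaleR dDDF dDF cdiff_cvec y simp: sandwich_def intro!: cdiff_sum cdiff_const,
        subst dirac_l_add, auto intro!: cdiff_mul dDDF dDF cdiff_cvec y simp: sandwich_def intro!: cdiff_sum cdiff_const)
  also have "\<dots> = (dirac_l (dirac_l (dirac_l F)) y \<odot> cvec y + sandwich (dirac_l (dirac_l F) y)
       + (- sandwich (dirac_l (dirac_l F) y) - 2 *\<^sub>R dirac_r (dirac_l F) y)) + ?c *\<^sub>R dirac_l (dirac_l F) y"
    by (simp add: dirac_l_mul_cvec[OF dDDF y] dirac_l_sandwich[OF dDF] dirac_l_scaleR[OF dDF])
  also have "dirac_l (dirac_l (dirac_l F)) y = - dirac_l (laplacian F) y"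
    by (rule dirac_l3_eq_dirac_l_laplacian[OF F3 y])
  also have "dirac_l (dirac_l F) y = - laplacian F y" by (rule dirac_l_dirac_l[OF F2 y])
  also have "dirac_r (dirac_l F) y = infra_op F y" by (rule dirac_r_dirac_l[OF F2 y])
  finally show ?thesis by (simp add: cmul_minus_left)
qed

lemma dirac_r_cvec_mul_kvector:
  assumes "cC 1 F" "\<And>z. z \<in> \<Omega> \<Longrightarrow> is_kvector k (F z)" "y \<in> \<Omega>"
  shows "dirac_r (\<lambda>z. cvec z \<odot> F z) y = cvec y \<odot> dirac_r F y + csig CARD('n) k *\<^sub>R F y"
  using dirac_r_cvec_mul[OF cC_cdiff[OF assms(1)] assms(3)] sandwich_kvector[OF assms(2)[OF assms(3)]]
  by (simp add: assms(3))

lemma dirac_r2_cvec_mul_kvector: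
  assumes F2: "cC 2 F" and kv: "\<And>z. z \<in> \<Omega> \<Longrightarrow> is_kvector k (F z)" and y: "y \<in> \<Omega>"
  shows "dirac_r (dirac_r (\<lambda>z. cvec z \<odot> F z)) y =
    (cvec y \<odot> dirac_r (dirac_r F) y + sandwich (dirac_r F y)) + csig CARD('n) k *\<^sub>R dirac_r F y"
proof -
  let ?c = "csig CARD('n) k"
  have dF: "cdiff F y" using cC_cdiff[OF F2 _ y] by simp
  have dDF: "cdiff (dirac_r F) y" using cC_cdiff[OF cC_dirac_r_le[OF F2] _ y] by simp
  have "dirac_r (dirac_r (\<lambda>z. cvec z \<odot> F z)) y = dirac_r (\<lambda>w. cvec w \<odot> dirac_r F w + ?c *\<^sub>R F w) y"
    using y by (rule dirac_r_loc) (rule dirac_r_cvec_mul_kvector[OF cC_mono_le[OF F2] kv]; simp)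
  also have "\<dots> = dirac_r (\<lambda>w. cvec w \<odot> dirac_r F w) y + dirac_r (\<lambda>w. ?c *\<^sub>R F w) y"
    by (rule dirac_r_add) (auto intro!: cdiff_mul cdiff_scaleR dDF dF cdiff_cvec y)
  also have "\<dots> = (cvec y \<odot> dirac_r (dirac_r F) y + sandwich (dirac_r F y)) + ?c *\<^sub>R dirac_r F y"
    by (simp add: dirac_r_cvec_mul[OF dDF y] dirac_r_scaleR[OF dF])
  finally show ?thesis .
qed

lemma dirac_r3_eq_dirac_r_laplacian:
  assumes "cC 3 F" "y \<in> \<Omega>"
  shows "dirac_r (dirac_r (dirac_r F)) y = - dirac_r (laplacian F) y"
proof -
  have "dirac_r (dirac_r (dirac_r F)) y = dirac_r (\<lambda>z. - laplacian F z) y"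
    using assms(2) by (rule dirac_r_loc) (rule dirac_r_dirac_r[OF cC_mono_le[OF assms(1)]]; simp)
  also have "\<dots> = - dirac_r (laplacian F) y"
    using cC_cdiff[OF cC_laplacian_le[OF assms(1)] _ assms(2)] by (simp add: dirac_r_minus)
  finally show ?thesis .
qed

lemma right_dirac3_x_F:
  assumes F3: "cC 3 F" and kv: "\<And>z. z \<in> \<Omega> \<Longrightarrow> is_kvector k (F z)" and y: "y \<in> \<Omega>"
  shows "dirac_r (dirac_r (dirac_r (\<lambda>z. cvec z \<odot> F z))) y =
    - (cvec y \<odot> dirac_r (laplacian F) y) - 2 *\<^sub>R infra_op F y - csig CARD('n) k *\<^sub>R laplacian F y"
proof -
  let ?c = "csig CARD('n) k"
  have F2: "cC 2 F" using F3 by (rule cC_mono_le) simp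
  have dDF: "cdiff (dirac_r F) y" using cC_cdiff[OF cC_dirac_r_le[OF F3] _ y] by simp
  have dDDF: "cdiff (dirac_r (dirac_r F)) y"
    using cC_cdiff[OF cC_dirac_r_le[OF cC_dirac_r_le[OF F3]] _ y] by simp
  have "dirac_r (dirac_r (dirac_r (\<lambda>z. cvec z \<odot> F z))) y =
     dirac_r (\<lambda>z. (cvec z \<odot> dirac_r (dirac_r F) z + sandwich (dirac_r F z)) + ?c *\<^sub>R dirac_r F z) y"
    using y by (rule dirac_r_loc) (rule dirac_r2_cvec_mul_kvector[OF F2 kv])
  also have "\<dots> = (dirac_r (\<lambda>z. cvec z \<odot> dirac_r (dirac_r F) z) y + dirac_r (\<lambda>z. sandwich (dirac_r F z)) y)
       + dirac_r (\<lambda>z. ?c *\<^sub>R dirac_r F z) y"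
    by (subst dirac_r_add, auto intro!: cdiff_add cdiff_mul cdiff_scaleR dDDF dDF cdiff_cvec y simp: sandwich_def intro!: cdiff_sum cdiff_const,
        subst dirac_r_add, auto intro!: cdiff_mul dDDF dDF cdiff_cvec y simp: sandwich_def intro!: cdiff_sum cdiff_const)
  also have "\<dots> = (cvec y \<odot> dirac_r (dirac_r (dirac_r F)) y + sandwich (dirac_r (dirac_r F) y)
       + (- sandwich (dirac_r (dirac_r F) y) - 2 *\<^sub>R dirac_l (dirac_r F) y)) + ?c *\<^sub>R dirac_r (dirac_r F) y"
    by (simp add: dirac_r_cvec_mul[OF dDDF y] dirac_r_sandwich[OF dDF] dirac_r_scaleR[OF dDF])
  also have "dirac_r (dirac_r (dirac_r F)) y = - dirac_r (laplacian F) y"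
    by (rule dirac_r3_eq_dirac_r_laplacian[OF F3 y])
  also have "dirac_r (dirac_r F) y = - laplacian F y" by (rule dirac_r_dirac_r[OF F2 y])
  also have "dirac_l (dirac_r F) y = infra_op F y" by (rule dirac_l_dirac_r[OF F2 y])
  finally show ?thesis by (simp add: cmul_minus_right)
qed

lemma laplacian_x_kvector_x:
  assumes G2: "cC 2 G" and kv: "\<And>z. z \<in> \<Omega> \<Longrightarrow> is_kvector k (G z)" and y: "y \<in> \<Omega>"
  shows "laplacian (\<lambda>z. cvec z \<odot> G z \<odot> cvec z) y =
    cvec y \<odot> laplacian G y \<odot> cvec y + 2 *\<^sub>R (cvec y \<odot> dirac_r G y) + 2 *\<^sub>R (dirac_l G y \<odot> cvec y)
    + (2 * csig CARD('n) k) *\<^sub>R G y"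
proof -
  have "laplacian (\<lambda>z. cvec z \<odot> G z \<odot> cvec z) y
      = cvec y \<odot> laplacian (\<lambda>z. G z \<odot> cvec z) y + 2 *\<^sub>R dirac_l (\<lambda>z. G z \<odot> cvec z) y"
    unfolding cmul_assoc by (rule laplacian_cvec_mul[OF cC_mul[OF G2 cC_cvec] y])
  also have "\<dots> = cvec y \<odot> (laplacian G y \<odot> cvec y + 2 *\<^sub>R dirac_r G y)
      + 2 *\<^sub>R (dirac_l G y \<odot> cvec y + csig CARD('n) k *\<^sub>R G y)"
    by (simp add: laplacian_mul_cvec[OF G2 y] dirac_l_kvector_mul_cvec[OF cC_mono_le[OF G2] kv y])
  finally show ?thesis
    by (simp add: cmul_add_right cmul_scaleR_right cmul_assoc scaleR_add_right add.assoc)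
qed

lemma bilaplacian_x_F_x:
  assumes F4: "cC 4 F" and kv: "\<And>z. z \<in> \<Omega> \<Longrightarrow> is_kvector k (F z)" and y: "y \<in> \<Omega>"
  shows "laplacian (laplacian (\<lambda>z. cvec z \<odot> F z \<odot> cvec z)) y =
    cvec y \<odot> laplacian (laplacian F) y \<odot> cvec y + 4 *\<^sub>R (cvec y \<odot> dirac_r (laplacian F) y)
    + 4 *\<^sub>R (dirac_l (laplacian F) y \<odot> cvec y) + 8 *\<^sub>R infra_op F y
    + (4 * csig CARD('n) k) *\<^sub>R laplacian F y"
proof -
  let ?c = "csig CARD('n) k"
  let ?A = "\<lambda>z. cvec z \<odot> laplacian F z \<odot> cvec z"
  let ?B = "\<lambda>z. cvec z \<odot> dirac_r F z" and ?C = "\<lambda>z. dirac_l F z \<odot> cvec z"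
  have F3: "cC 3 F" and F2: "cC 2 F" using F4 by (auto elim: cC_mono_le)
  have L2: "cC 2 (laplacian F)" using cC_laplacian_le[OF F4] by simp
  have DR2: "cC 2 (dirac_r F)" and DL2: "cC 2 (dirac_l F)"
    using cC_mono_le[OF cC_dirac_r_le[OF F4]] cC_mono_le[OF cC_dirac_l_le[OF F4]] by simp_all
  have reg: "cC 2 ?A" "cC 2 ?B" "cC 2 ?C"
    by (auto intro!: cC_mul cC_cvec L2 DR2 DL2)
  have "laplacian (laplacian (\<lambda>z. cvec z \<odot> F z \<odot> cvec z)) y
      = laplacian (\<lambda>z. ?A z + 2 *\<^sub>R ?B z + 2 *\<^sub>R ?C z + (2 * ?c) *\<^sub>R F z) y"
    using y by (rule laplacian_loc) (rule laplacian_x_kvector_x[OF F2 kv])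
  also have "\<dots> = laplacian ?A y + 2 *\<^sub>R laplacian ?B y + 2 *\<^sub>R laplacian ?C y + (2 * ?c) *\<^sub>R laplacian F y"
    using reg F2 y by (simp add: laplacian_add_scaleR cC_add cC_scaleR)
  also have "laplacian ?A y = cvec y \<odot> laplacian (laplacian F) y \<odot> cvec y
      + 2 *\<^sub>R (cvec y \<odot> dirac_r (laplacian F) y) + 2 *\<^sub>R (dirac_l (laplacian F) y \<odot> cvec y)
      + (2 * ?c) *\<^sub>R laplacian F y"
    by (rule laplacian_x_kvector_x[OF L2 kvector_laplacian[OF kv] y])
  also have "laplacian ?B y = cvec y \<odot> dirac_r (laplacian F) y + 2 *\<^sub>R infra_op F y"
    by (simp add: laplacian_cvec_mul[OF DR2 y] laplacian_dirac_r[OF F3 y] dirac_l_dirac_r[OF F2 y])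
  also have "laplacian ?C y = dirac_l (laplacian F) y \<odot> cvec y + 2 *\<^sub>R infra_op F y"
    by (simp add: laplacian_mul_cvec[OF DL2 y] laplacian_dirac_l[OF F3 y] dirac_r_dirac_l[OF F2 y])
  finally show ?thesis by (simp only: regroup_bilaplacian)
qed

lemma inframonogenic_laplacian_consequences:
  assumes F4: "cC 4 F" and I: "\<And>z. z \<in> \<Omega> \<Longrightarrow> infra_op F z = 0" and y: "y \<in> \<Omega>"
  shows "dirac_l (laplacian F) y = 0" "dirac_r (laplacian F) y = 0" "laplacian (laplacian F) y = 0"
proof -
  have F3: "cC 3 F" using F4 by (rule cC_mono_le) simp
  have DL: "dirac_l (laplacian F) z = 0" if "z \<in> \<Omega>" for z
    using dirac_r_infra_op[OF F3 that] dirac_r_vanish[OF I that] by simp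
  show "dirac_l (laplacian F) y = 0" using DL[OF y] .
  show "dirac_r (laplacian F) y = 0"
    using dirac_l_infra_op[OF F3 y] dirac_l_vanish[OF I y] by simp
  have "laplacian (laplacian F) y = - dirac_l (dirac_l (laplacian F)) y"
    using dirac_l_dirac_l[OF _ y, of "laplacian F"] cC_laplacian_le[OF F4] by simp
  thus "laplacian (laplacian F) y = 0" using dirac_l_vanish[OF DL y] by simp
qed

lemma harmonic_case:
  assumes F4: "cC 4 F" and kv: "\<And>z. z \<in> \<Omega> \<Longrightarrow> is_kvector k (F z)"
    and H: "\<And>z. z \<in> \<Omega> \<Longrightarrow> laplacian F z = 0" and y: "y \<in> \<Omega>"
  shows "dirac_l (dirac_l (dirac_l (\<lambda>z. F z \<odot> cvec z))) y = (-2) *\<^sub>R infra_op F y"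
    and "dirac_r (dirac_r (dirac_r (\<lambda>z. cvec z \<odot> F z))) y = (-2) *\<^sub>R infra_op F y"
    and "laplacian (laplacian (\<lambda>z. cvec z \<odot> F z \<odot> cvec z)) y = 8 *\<^sub>R infra_op F y"
proof -
  have F3: "cC 3 F" using F4 by (rule cC_mono_le) simp
  note zero = H[OF y] dirac_l_vanish[OF H y] dirac_r_vanish[OF H y] laplacian_vanish[OF H y]
  show "dirac_l (dirac_l (dirac_l (\<lambda>z. F z \<odot> cvec z))) y = (-2) *\<^sub>R infra_op F y"
    using left_dirac3_F_x[OF F3 kv y] by (simp add: zero)
  show "dirac_r (dirac_r (dirac_r (\<lambda>z. cvec z \<odot> F z))) y = (-2) *\<^sub>R infra_op F y"
    using right_dirac3_x_F[OF F3 kv y] by (simp add: zero)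
  show "laplacian (laplacian (\<lambda>z. cvec z \<odot> F z \<odot> cvec z)) y = 8 *\<^sub>R infra_op F y"
    using bilaplacian_x_F_x[OF F4 kv y] by (simp add: zero)
qed

lemma inframonogenic_case:
  assumes F4: "cC 4 F" and kv: "\<And>z. z \<in> \<Omega> \<Longrightarrow> is_kvector k (F z)"
    and I: "\<And>z. z \<in> \<Omega> \<Longrightarrow> infra_op F z = 0" and y: "y \<in> \<Omega>"
  shows "dirac_l (dirac_l (dirac_l (\<lambda>z. F z \<odot> cvec z))) y = (- csig CARD('n) k) *\<^sub>R laplacian F y"
    and "dirac_r (dirac_r (dirac_r (\<lambda>z. cvec z \<odot> F z))) y = (- csig CARD('n) k) *\<^sub>R laplacian F y"
    and "laplacian (laplacian (\<lambda>z. cvec z \<odot> F z \<odot> cvec z)) y = (4 * csig CARD('n) k) *\<^sub>R laplacian F y"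
proof -
  have F3: "cC 3 F" using F4 by (rule cC_mono_le) simp
  note zero = I[OF y] inframonogenic_laplacian_consequences[OF F4 I y]
  show "dirac_l (dirac_l (dirac_l (\<lambda>z. F z \<odot> cvec z))) y = (- csig CARD('n) k) *\<^sub>R laplacian F y"
    using left_dirac3_F_x[OF F3 kv y] by (simp add: zero)
  show "dirac_r (dirac_r (dirac_r (\<lambda>z. cvec z \<odot> F z))) y = (- csig CARD('n) k) *\<^sub>R laplacian F y"
    using right_dirac3_x_F[OF F3 kv y] by (simp add: zero)
  show "laplacian (laplacian (\<lambda>z. cvec z \<odot> F z \<odot> cvec z)) y = (4 * csig CARD('n) k) *\<^sub>R laplacian F y"
    using bilaplacian_x_F_x[OF F4 kv y] by (simp add: zero)
qed

end

theorem proposition3: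
  fixes F :: "(real, 'n::{finite,linorder}) vec \<Rightarrow> 'n clif"
    and \<Omega> :: "((real, 'n) vec) set" and k :: nat
  assumes "open \<Omega>"
    and "k \<le> CARD('n)" and "2 * k \<noteq> CARD('n)"
    and "cCk_on 4 F \<Omega>"
    and "\<forall>x\<in>\<Omega>. is_kvector k (F x)"
  shows "(harmonic_on F \<Omega> \<longrightarrow>
           (inframonogenic_on F \<Omega> \<longleftrightarrow> left_3_monogenic_on (\<lambda>x. F x \<odot> cvec x) \<Omega>) \<and>
           (inframonogenic_on F \<Omega> \<longleftrightarrow> right_3_monogenic_on (\<lambda>x. cvec x \<odot> F x) \<Omega>) \<and>
           (inframonogenic_on F \<Omega> \<longleftrightarrow> biharmonic_on (\<lambda>x. cvec x \<odot> F x \<odot> cvec x) \<Omega>)) \<and>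
         (inframonogenic_on F \<Omega> \<longrightarrow>
           (harmonic_on F \<Omega> \<longleftrightarrow> left_3_monogenic_on (\<lambda>x. F x \<odot> cvec x) \<Omega>) \<and>
           (harmonic_on F \<Omega> \<longleftrightarrow> right_3_monogenic_on (\<lambda>x. cvec x \<odot> F x) \<Omega>) \<and>
           (harmonic_on F \<Omega> \<longleftrightarrow> biharmonic_on (\<lambda>x. cvec x \<odot> F x \<odot> cvec x) \<Omega>))"
proof -
  interpret open_domain \<Omega> using assms(1) by unfold_locales
  have c: "csig CARD('n) k \<noteq> 0" using csig_nonzero[OF assms(3)] .
  have kv: "\<And>z. z \<in> \<Omega> \<Longrightarrow> is_kvector k (F z)" using assms(5) by blast
  show ?thesis
  proof (intro conjI impI)
    assume "harmonic_on F \<Omega>"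
    hence "\<And>z. z \<in> \<Omega> \<Longrightarrow> laplacian F z = 0" by (simp add: harmonic_on_iff)
    note eqs = harmonic_case[OF assms(4) kv this]
    show "inframonogenic_on F \<Omega> \<longleftrightarrow> left_3_monogenic_on (\<lambda>x. F x \<odot> cvec x) \<Omega>"
      and "inframonogenic_on F \<Omega> \<longleftrightarrow> right_3_monogenic_on (\<lambda>x. cvec x \<odot> F x) \<Omega>"
      and "inframonogenic_on F \<Omega> \<longleftrightarrow> biharmonic_on (\<lambda>x. cvec x \<odot> F x \<odot> cvec x) \<Omega>"
      by (simp_all add: inframonogenic_on_iff left_3_monogenic_on_iff right_3_monogenic_on_iff
          biharmonic_on_iff eqs)
  next
    assume "inframonogenic_on F \<Omega>"
    hence "\<And>z. z \<in> \<Omega> \<Longrightarrow> infra_op F z = 0" by (simp add: inframonogenic_on_iff)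
    note eqs = inframonogenic_case[OF assms(4) kv this]
    show "harmonic_on F \<Omega> \<longleftrightarrow> left_3_monogenic_on (\<lambda>x. F x \<odot> cvec x) \<Omega>"
      and "harmonic_on F \<Omega> \<longleftrightarrow> right_3_monogenic_on (\<lambda>x. cvec x \<odot> F x) \<Omega>"
      and "harmonic_on F \<Omega> \<longleftrightarrow> biharmonic_on (\<lambda>x. cvec x \<odot> F x \<odot> cvec x) \<Omega>"
      by (simp_all add: harmonic_on_iff left_3_monogenic_on_iff right_3_monogenic_on_iff
          biharmonic_on_iff eqs c)
  qed
qed

end
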